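(* Let $E$ be a complex Banach lattice, let $A$ be a closed, densely defined operator on $E$, and let $\lambda_0\in\sigma(A)$ be a pole of the resolvent. Assume that $\ker(\lambda_0I-A)$ is one-dimensional and that both $\ker(\lambda_0I-A)$ and $\ker(\lambda_0I-A')$ contain non-zero positive vectors. Assume further that at least one of the following holds: (a) $\ker(\lambda_0I-A)$ contains a quasi-interior point of $E_+$; (b) $\ker(\lambda_0I-A')$ contains a strictly positive functional. Then $\lambda_0$ is an algebraically simple eigenvalue of $A$ (in particular a first-order pole of $R(\cdot,A)$) and the corresponding spectral projection is positive.
   Context: $A'$ is the adjoint of $A$. $u\in E_+$ is a quasi-interior point if the principal ideal $\{f:|f|\le cu \text{ for some }c\ge0\}$ is dense in $E$. $\varphi\in E'$ is strictly positive if $\langle\varphi,f\rangle>0$ for all $f\in E_+\setminus\{0\}$. The spectral projection is the residue of $R(\cdot,A)$ at $\lambda_0$. *)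

theory Defs
  imports "HOL-Analysis.Analysis"
begin

text \<open>A complex Banach lattice E is the complexification of a real Banach lattice E_R.
  We model E_R by a type 'r (a real Banach space which is a vector lattice whose norm is a
  lattice norm) and E by the pair type 'r \<times> 'r, the pair (x,y) standing for x + i y.\<close>

definition real_banach_lattice :: "'r::{banach,ordered_real_vector,lattice} itself \<Rightarrow> bool" where
  "real_banach_lattice _ \<longleftrightarrow>
     (\<forall>x y :: 'r. sup x (-x) \<le> sup y (-y) \<longrightarrow> norm x \<le> norm y)"

definition cscale :: "complex \<Rightarrow> 'r::real_vector \<times> 'r \<Rightarrow> 'r \<times> 'r" where
  "cscale c f = (Re c *\<^sub>R fst f - Im c *\<^sub>R snd f, Im c *\<^sub>R fst f + Re c *\<^sub>R snd f)"

definition complex_linear_op :: "('r::real_vector \<times> 'r \<Rightarrow> 'r \<times> 'r) \<Rightarrow> ('r \<times> 'r) set \<Rightarrow> bool" where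
  "complex_linear_op A D \<longleftrightarrow> 0 \<in> D \<and>
     (\<forall>u\<in>D. \<forall>v\<in>D. u + v \<in> D \<and> A (u + v) = A u + A v) \<and>
     (\<forall>c. \<forall>u\<in>D. cscale c u \<in> D \<and> A (cscale c u) = cscale c (A u))"

definition closed_op :: "('r::real_normed_vector \<times> 'r \<Rightarrow> 'r \<times> 'r) \<Rightarrow> ('r \<times> 'r) set \<Rightarrow> bool" where
  "closed_op A D \<longleftrightarrow> closed {(u, A u) | u. u \<in> D}"

definition densely_defined :: "('r::real_normed_vector \<times> 'r) set \<Rightarrow> bool" where
  "densely_defined D \<longleftrightarrow> closure D = UNIV"

definition resolvent :: "('r::real_vector \<times> 'r \<Rightarrow> 'r \<times> 'r) \<Rightarrow> ('r \<times> 'r) set \<Rightarrow> complex \<Rightarrow> 'r \<times> 'r \<Rightarrow> 'r \<times> 'r" where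
  "resolvent A D l y = (THE u. u \<in> D \<and> cscale l u - A u = y)"

definition resolvent_set :: "('r::real_normed_vector \<times> 'r \<Rightarrow> 'r \<times> 'r) \<Rightarrow> ('r \<times> 'r) set \<Rightarrow> complex set" where
  "resolvent_set A D = {l. (\<forall>y. \<exists>!u. u \<in> D \<and> cscale l u - A u = y) \<and> bounded_linear (resolvent A D l)}"

definition spectrum_op :: "('r::real_normed_vector \<times> 'r \<Rightarrow> 'r \<times> 'r) \<Rightarrow> ('r \<times> 'r) set \<Rightarrow> complex set" where
  "spectrum_op A D = - resolvent_set A D"

definition resolvent_pole :: "('r::banach \<times> 'r \<Rightarrow> 'r \<times> 'r) \<Rightarrow> ('r \<times> 'r) set \<Rightarrow> complex \<Rightarrow> bool" where
  "resolvent_pole A D l0 \<longleftrightarrow> l0 \<in> spectrum_op A D \<and>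
     (\<exists>e>0. ball l0 e - {l0} \<subseteq> resolvent_set A D) \<and>
     (\<exists>n::nat. \<exists>L. ((\<lambda>z. Blinfun (\<lambda>y. cscale ((z - l0) ^ n) (resolvent A D z y))) \<longlongrightarrow> L) (at l0))"

definition first_order_pole :: "('r::banach \<times> 'r \<Rightarrow> 'r \<times> 'r) \<Rightarrow> ('r \<times> 'r) set \<Rightarrow> complex \<Rightarrow> bool" where
  "first_order_pole A D l0 \<longleftrightarrow> resolvent_pole A D l0 \<and>
     (\<exists>L. ((\<lambda>z. Blinfun (\<lambda>y. cscale (z - l0) (resolvent A D z y))) \<longlongrightarrow> L) (at l0))"

definition eigenspace_op :: "('r::real_vector \<times> 'r \<Rightarrow> 'r \<times> 'r) \<Rightarrow> ('r \<times> 'r) set \<Rightarrow> complex \<Rightarrow> ('r \<times> 'r) set" where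
  "eigenspace_op A D l = {u \<in> D. cscale l u - A u = 0}"

definition one_dim_cspace :: "('r::real_vector \<times> 'r) set \<Rightarrow> bool" where
  "one_dim_cspace S \<longleftrightarrow> (\<exists>v. v \<noteq> 0 \<and> S = range (\<lambda>c. cscale c v))"

definition pos_vec :: "'r::{real_vector,order} \<times> 'r \<Rightarrow> bool" where
  "pos_vec f \<longleftrightarrow> snd f = 0 \<and> fst f \<ge> 0"

definition dual_functional :: "('r::real_normed_vector \<times> 'r \<Rightarrow> complex) \<Rightarrow> bool" where
  "dual_functional \<phi> \<longleftrightarrow> bounded_linear \<phi> \<and> (\<forall>c f. \<phi> (cscale c f) = c * \<phi> f)"

definition adjoint_rel :: "('r::real_normed_vector \<times> 'r \<Rightarrow> 'r \<times> 'r) \<Rightarrow> ('r \<times> 'r) set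
    \<Rightarrow> ('r \<times> 'r \<Rightarrow> complex) \<Rightarrow> ('r \<times> 'r \<Rightarrow> complex) \<Rightarrow> bool" where
  "adjoint_rel A D \<phi> \<psi> \<longleftrightarrow> dual_functional \<phi> \<and> dual_functional \<psi> \<and> (\<forall>u\<in>D. \<phi> (A u) = \<psi> u)"

definition adj_eigenspace :: "('r::real_normed_vector \<times> 'r \<Rightarrow> 'r \<times> 'r) \<Rightarrow> ('r \<times> 'r) set
    \<Rightarrow> complex \<Rightarrow> ('r \<times> 'r \<Rightarrow> complex) set" where
  "adj_eigenspace A D l = {\<phi>. adjoint_rel A D \<phi> (\<lambda>f. l * \<phi> f)}"

definition pos_functional :: "('r::{real_normed_vector,order} \<times> 'r \<Rightarrow> complex) \<Rightarrow> bool" where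
  "pos_functional \<phi> \<longleftrightarrow> (\<forall>f. pos_vec f \<longrightarrow> Im (\<phi> f) = 0 \<and> Re (\<phi> f) \<ge> 0)"

definition strictly_pos_functional :: "('r::{real_normed_vector,order} \<times> 'r \<Rightarrow> complex) \<Rightarrow> bool" where
  "strictly_pos_functional \<phi> \<longleftrightarrow> (\<forall>f. pos_vec f \<and> f \<noteq> 0 \<longrightarrow> Im (\<phi> f) = 0 \<and> Re (\<phi> f) > 0)"

text \<open>Principal ideal {f. |f| \<le> c u for some c \<ge> 0}, where for f = x + i y the modulus
  |f| = sup over \<theta> of (cos \<theta> x + sin \<theta> y); so |f| \<le> c u iff c u is an upper bound of that set.\<close>
definition principal_ideal :: "'r::{real_vector,order} \<times> 'r \<Rightarrow> ('r \<times> 'r) set" where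
  "principal_ideal u = {f. \<exists>c::real. c \<ge> 0 \<and>
      (\<forall>\<theta>::real. cos \<theta> *\<^sub>R fst f + sin \<theta> *\<^sub>R snd f \<le> c *\<^sub>R fst u)}"

definition quasi_interior :: "'r::{real_normed_vector,order} \<times> 'r \<Rightarrow> bool" where
  "quasi_interior u \<longleftrightarrow> pos_vec u \<and> closure (principal_ideal u) = UNIV"

definition pos_op :: "('r::{real_vector,order} \<times> 'r \<Rightarrow> 'r \<times> 'r) \<Rightarrow> bool" where
  "pos_op P \<longleftrightarrow> (\<forall>f. pos_vec f \<longrightarrow> pos_vec (P f))"

text \<open>Spectral projection = residue of R(.,A) at l0:
  P f = (1/(2 pi i)) \<ointegral>_{|z-l0|=\<epsilon>} R(z,A) f dz for all small \<epsilon> > 0,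
  written out with \<gamma>(t) = l0 + \<epsilon> e^{2 pi i t}, \<gamma>'(t)/(2 pi i) = \<epsilon> e^{2 pi i t}.\<close>
definition spectral_projection :: "('r::banach \<times> 'r \<Rightarrow> 'r \<times> 'r) \<Rightarrow> ('r \<times> 'r) set \<Rightarrow> complex
    \<Rightarrow> ('r \<times> 'r \<Rightarrow> 'r \<times> 'r) \<Rightarrow> bool" where
  "spectral_projection A D l0 P \<longleftrightarrow> (\<exists>e>0. \<forall>\<epsilon>. 0 < \<epsilon> \<and> \<epsilon> < e \<longrightarrow> (\<forall>f.
     ((\<lambda>t::real. cscale (of_real \<epsilon> * exp (2 * of_real pi * \<i> * of_real t))
          (resolvent A D (l0 + of_real \<epsilon> * exp (2 * of_real pi * \<i> * of_real t)) f))
       has_integral P f) {0..1}))"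

end

theory Submission
  imports Defs "HOL-Complex_Analysis.Complex_Analysis"
begin

text \<open>
  The spectral projection is the residue \<open>P = B\<^sub>0\<close> of the resolvent, where
  \<open>B\<^sub>k f = (2\<pi>i)\<^sup>-\<^sup>1 \<ointegral> (z - \<lambda>\<^sub>0)\<^sup>k R(z) f dz\<close> over small circles around \<open>\<lambda>\<^sub>0\<close>.
  Since \<open>(z - \<lambda>\<^sub>0)\<^sup>n R(z)\<close> stays bounded, \<open>B\<^sub>k = 0\<close> for \<open>k \<ge> n\<close>, and \<open>R(z)\<close> minus its
  principal part \<open>\<Sum>\<^sub>k (z - \<lambda>\<^sub>0)\<^sup>-\<^sup>k\<^sup>-\<^sup>1 B\<^sub>k\<close> stays bounded as well.

  If \<open>B\<^sub>m\<close> is the last nonzero coefficient, then \<open>B\<^sub>m f = lim (z - \<lambda>\<^sub>0)\<^sup>m\<^sup>+\<^sup>1 R(z) f\<close>, and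
  closedness of \<open>A\<close> puts it into \<open>ker(\<lambda>\<^sub>0 - A) = \<complex>u\<close>. An eigenfunctional \<open>\<phi>\<close> of \<open>A'\<close>
  satisfies \<open>\<phi>(R(z) f) = \<phi>(f) / (z - \<lambda>\<^sub>0)\<close>, so \<open>\<phi>(B\<^sub>m f) = 0\<close> for \<open>m \<ge> 1\<close>; if \<open>\<phi>(u) \<noteq> 0\<close>
  this forces \<open>B\<^sub>m = 0\<close>. Hence the pole is simple and \<open>P f = (\<phi> f / \<phi> u) u\<close>, which is
  positive once \<open>\<phi>\<close> is positive and \<open>\<phi> u > 0\<close>. Such a pair exists under (b) directly,
  and under (a) because a positive functional vanishing at a quasi-interior point vanishes
  on its principal ideal, hence everywhere.
\<close>

section \<open>Complex scalar multiplication on the complexification\<close>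

lemma cscale_add: "cscale c (u + v) = cscale c u + cscale c (v::'r::real_vector \<times> 'r)"
  by (simp add: cscale_def prod_eq_iff algebra_simps)
lemma cscale_diff: "cscale c (u - v) = cscale c u - cscale c (v::'r::real_vector \<times> 'r)"
  by (simp add: cscale_def prod_eq_iff algebra_simps)
lemma cscale_minus: "cscale c (- v) = - cscale c (v::'r::real_vector \<times> 'r)"
  by (simp add: cscale_def prod_eq_iff algebra_simps)
lemma cscale_zero[simp]: "cscale c (0::'r::real_vector \<times> 'r) = 0"
  by (simp add: cscale_def prod_eq_iff)
lemma cscale_zero_left[simp]: "cscale 0 (v::'r::real_vector \<times> 'r) = 0"
  by (simp add: cscale_def prod_eq_iff)
lemma cscale_one[simp]: "cscale 1 (v::'r::real_vector \<times> 'r) = v"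
  by (simp add: cscale_def prod_eq_iff)
lemma cscale_cscale: "cscale a (cscale b v) = cscale (a * b) (v::'r::real_vector \<times> 'r)"
  by (simp add: cscale_def prod_eq_iff algebra_simps)
lemma cscale_minus_left: "cscale (- c) v = - cscale c (v::'r::real_vector \<times> 'r)"
  by (simp add: cscale_def prod_eq_iff algebra_simps)
lemma cscale_diff_commute: "cscale (z - w) x = - cscale (w - z) (x::'r::real_vector \<times> 'r)"
  by (simp add: cscale_def prod_eq_iff algebra_simps)
lemma cscale_add_left: "cscale (a + b) v = cscale a v + cscale b (v::'r::real_vector \<times> 'r)"
  by (simp add: cscale_def prod_eq_iff algebra_simps)
lemma cscale_diff_left: "cscale (a - b) v = cscale a v - cscale b (v::'r::real_vector \<times> 'r)"
  by (simp add: cscale_def prod_eq_iff algebra_simps)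
lemma cscale_scaleR: "cscale a (r *\<^sub>R v) = r *\<^sub>R cscale a (v::'r::real_vector \<times> 'r)"
  by (simp add: cscale_def prod_eq_iff algebra_simps)
lemma cscale_of_real: "cscale (of_real r) v = r *\<^sub>R (v::'r::real_vector \<times> 'r)"
  by (simp add: cscale_def prod_eq_iff algebra_simps)
lemma cscale_scaleR_left: "cscale (r *\<^sub>R a) v = r *\<^sub>R cscale a (v::'r::real_vector \<times> 'r)"
  by (simp add: cscale_def prod_eq_iff algebra_simps)
lemma cscale_commute: "cscale a (cscale b v) = cscale b (cscale a (v::'r::real_vector \<times> 'r))"
  by (simp add: cscale_cscale mult.commute)
lemma cscale_inverse: "a \<noteq> 0 \<Longrightarrow> cscale (inverse a) (cscale a v) = (v::'r::real_vector \<times> 'r)"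
  by (simp add: cscale_cscale)
lemma cscale_sum: "cscale c (sum f S) = sum (\<lambda>i. cscale c (f i)) S"
  by (induction S rule: infinite_finite_induct) (auto simp: cscale_add)
lemma cscale_sum_left: "cscale (sum f S) v = sum (\<lambda>i. cscale (f i) v) S"
  by (induction S rule: infinite_finite_induct) (auto simp: cscale_add_left)

lemma norm_cscale_le: "norm (cscale c (v::'r::real_normed_vector \<times> 'r)) \<le> 4 * cmod c * norm v"
proof -
  obtain x y where v: "v = (x,y)" by fastforce
  have re: "\<bar>Re c\<bar> \<le> cmod c" and im: "\<bar>Im c\<bar> \<le> cmod c" by (simp_all add: abs_Re_le_cmod abs_Im_le_cmod)
  have nx: "norm x \<le> norm v" and ny: "norm y \<le> norm v" using v
    by (simp_all add: norm_Pair real_le_rsqrt)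
  have "norm (cscale c v) \<le> norm (Re c *\<^sub>R x - Im c *\<^sub>R y) + norm (Im c *\<^sub>R x + Re c *\<^sub>R y)"
    using sqrt_sum_squares_le_sum_abs[of "norm (Re c *\<^sub>R x - Im c *\<^sub>R y)" "norm (Im c *\<^sub>R x + Re c *\<^sub>R y)"]
    by (simp add: cscale_def v norm_Pair)
  also have "\<dots> \<le> (\<bar>Re c\<bar> * norm x + \<bar>Im c\<bar> * norm y) + (\<bar>Im c\<bar> * norm x + \<bar>Re c\<bar> * norm y)"
    by (intro add_mono order.trans[OF norm_triangle_ineq4] order.trans[OF norm_triangle_ineq]) auto
  also have "\<dots> \<le> (cmod c * norm v + cmod c * norm v) + (cmod c * norm v + cmod c * norm v)"
    by (intro add_mono mult_mono re im nx ny) auto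
  finally show ?thesis by simp
qed

lemma bounded_bilinear_cscale: "bounded_bilinear (\<lambda>c (v::'r::real_normed_vector \<times> 'r). cscale c v)"
proof
  show "\<exists>K. \<forall>a b. norm (cscale a (b::'r \<times> 'r)) \<le> norm a * norm b * K"
    by (rule exI[of _ 4]) (auto intro: order.trans[OF norm_cscale_le] simp: ac_simps)
qed (simp_all add: cscale_add cscale_add_left cscale_scaleR cscale_scaleR_left)

lemmas bounded_linear_cscale_right = bounded_bilinear.bounded_linear_right[OF bounded_bilinear_cscale]
lemmas bounded_linear_cscale_left = bounded_bilinear.bounded_linear_left[OF bounded_bilinear_cscale]
lemmas tendsto_cscale[tendsto_intros] = bounded_bilinear.tendsto[OF bounded_bilinear_cscale]
lemmas continuous_on_cscale[continuous_intros] = bounded_bilinear.continuous_on[OF bounded_bilinear_cscale]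

lemma one_dim_cspace_generator:
  assumes "one_dim_cspace S" "u \<in> S" "u \<noteq> (0::'r::real_vector \<times> 'r)"
  shows "S = range (\<lambda>c. cscale c u)"
proof -
  obtain v where v: "v \<noteq> 0" "S = range (\<lambda>c. cscale c v)" using assms(1) by (auto simp: one_dim_cspace_def)
  obtain c0 where c0: "u = cscale c0 v" using assms(2) v by auto
  have "c0 \<noteq> 0" using c0 assms(3) by auto
  show ?thesis
  proof (rule set_eqI, rule iffI)
    fix w assume "w \<in> S"
    then obtain c where "w = cscale c v" using v by auto
    then have "w = cscale (c / c0) u" using \<open>c0 \<noteq> 0\<close> by (simp add: c0 cscale_cscale)
    then show "w \<in> range (\<lambda>c. cscale c u)" by simp
  next
    fix w assume "w \<in> range (\<lambda>c. cscale c u)"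
    then obtain c where "w = cscale c u" by auto
    then have "w = cscale (c * c0) v" by (simp add: c0 cscale_cscale)
    then show "w \<in> S" using v by simp
  qed
qed

lemma norm_le_linear_imp_zero:
  fixes v :: "'a::real_normed_vector"
  assumes c: "0 < c" and h: "\<And>\<rho>. 0 < \<rho> \<Longrightarrow> \<rho> < c \<Longrightarrow> norm v \<le> C * \<rho>"
  shows "v = 0"
proof (rule ccontr)
  assume "v \<noteq> 0"
  then have nv: "0 < norm v" by simp
  show False
  proof (cases "C \<le> 0")
    case True
    have "norm v \<le> C * (c/2)" using h[of "c/2"] c by auto
    also have "\<dots> \<le> 0" using True c by (simp add: mult_nonpos_nonneg)
    finally show False using nv by simp
  next
    case False
    define \<rho> where "\<rho> = min (c/2) (norm v / (2 * C))"
    have r: "0 < \<rho>" "\<rho> < c" using c nv False by (auto simp: \<rho>_def)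
    have "norm v \<le> C * \<rho>" by (rule h[OF r])
    also have "\<dots> \<le> C * (norm v / (2 * C))" using False by (intro mult_left_mono) (auto simp: \<rho>_def)
    also have "\<dots> = norm v / 2" using False by simp
    finally show False using nv by simp
  qed
qed

lemma has_integral_norm_bound01:
  fixes f :: "real \<Rightarrow> 'a::real_normed_vector"
  assumes "(f has_integral i) {0..1}" "0 \<le> C" "\<And>t. t \<in> {0..1} \<Longrightarrow> norm (f t) \<le> C"
  shows "norm i \<le> C"
  using has_integral_bound[of C f i 0 1] assms by simp

lemma geometric_partial_fraction:
  fixes s a :: complex assumes "a \<noteq> 0" "s \<noteq> a"
  shows "s / (s - a) = - (\<Sum>k<m. s ^ Suc k / a ^ Suc k) + s ^ Suc m / (a ^ m * (s - a))"
proof (induction m)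
  case 0 then show ?case using assms by simp
next
  case (Suc m)
  obtain c where c: "s = a + c" "c \<noteq> 0" using assms by (metis add_diff_cancel_left' diff_eq_eq eq_iff_diff_eq_0)
  have "s ^ Suc (Suc m) / (a ^ Suc m * (s - a)) - s ^ Suc m / (a ^ m * (s - a)) = s ^ Suc m / a ^ Suc m"
    unfolding c(1) using assms c by (simp add: field_simps power_Suc)
  then show ?case using Suc by (simp add: algebra_simps)
qed

section \<open>The resolvent of a closed operator\<close>

lemma adj_eigenspaceD:
  assumes "\<phi> \<in> adj_eigenspace A D l"
  shows "bounded_linear \<phi>" "\<And>c f. \<phi> (cscale c f) = c * \<phi> f"
    "\<And>u. u \<in> D \<Longrightarrow> \<phi> (A u) = l * \<phi> u"
  using assms by (auto simp: adj_eigenspace_def adjoint_rel_def dual_functional_def)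

locale closed_operator =
  fixes A :: "'r::banach \<times> 'r \<Rightarrow> 'r \<times> 'r" and D :: "('r \<times> 'r) set"
  assumes lin: "complex_linear_op A D" and clo: "closed_op A D"
begin

abbreviation "R \<equiv> resolvent A D"
abbreviation "U \<equiv> resolvent_set A D"

lemma dom_add: "u \<in> D \<Longrightarrow> v \<in> D \<Longrightarrow> u + v \<in> D"
  and op_add: "u \<in> D \<Longrightarrow> v \<in> D \<Longrightarrow> A (u + v) = A u + A v"
  using lin unfolding complex_linear_op_def by auto
lemma dom_cscale: "u \<in> D \<Longrightarrow> cscale c u \<in> D"
  and op_cscale: "u \<in> D \<Longrightarrow> A (cscale c u) = cscale c (A u)"
  using lin unfolding complex_linear_op_def by auto
lemma resolvent_ex1: "z \<in> U \<Longrightarrow> \<exists>!u. u \<in> D \<and> cscale z u - A u = y"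
  by (simp only: resolvent_set_def mem_Collect_eq)
lemma bounded_linear_resolvent: "z \<in> U \<Longrightarrow> bounded_linear (R z)"
  unfolding resolvent_set_def by auto
lemma resolvent_in_dom: "z \<in> U \<Longrightarrow> R z y \<in> D"
  and resolvent_eq: "z \<in> U \<Longrightarrow> cscale z (R z y) - A (R z y) = y"
  using theI'[OF resolvent_ex1[of z y]] unfolding resolvent_def by auto
lemma resolvent_unique: "z \<in> U \<Longrightarrow> u \<in> D \<Longrightarrow> cscale z u - A u = y \<Longrightarrow> R z y = u"
  using resolvent_ex1[of z y] resolvent_in_dom[of z y] resolvent_eq[of z y] by blast

lemma resolvent_cscale: assumes "z \<in> U" shows "R z (cscale c y) = cscale c (R z y)"
proof (rule resolvent_unique[OF assms])
  show "cscale c (R z y) \<in> D" by (rule dom_cscale[OF resolvent_in_dom[OF assms]])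
  show "cscale z (cscale c (R z y)) - A (cscale c (R z y)) = cscale c y"
    using resolvent_eq[OF assms, of y] by (simp add: op_cscale[OF resolvent_in_dom[OF assms]] cscale_commute[of z c] cscale_diff[symmetric])
qed

lemma resolvent_identity: assumes z: "z \<in> U" and w: "w \<in> U"
  shows "R z y = R w y + cscale (w - z) (R z (R w y))"
proof (rule resolvent_unique[OF z])
  let ?a = "R w y" and ?b = "R z (R w y)"
  have a: "?a \<in> D" and b: "?b \<in> D" using resolvent_in_dom z w by auto
  show "?a + cscale (w - z) ?b \<in> D" by (intro dom_add dom_cscale a b)
  have ea: "cscale w ?a - A ?a = y" by (rule resolvent_eq[OF w])
  have eb: "cscale z ?b - A ?b = ?a" by (rule resolvent_eq[OF z])
  have "cscale z (?a + cscale (w - z) ?b) - A (?a + cscale (w - z) ?b)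
      = (cscale z ?a - A ?a) + cscale (w - z) (cscale z ?b - A ?b)"
    by (simp add: op_add[OF a dom_cscale[OF b]] op_cscale[OF b] cscale_add cscale_diff cscale_commute[of z "w - z"] algebra_simps)
  also have "cscale z ?a - A ?a = y - cscale (w - z) ?a"
    using ea by (simp add: cscale_diff_left algebra_simps)
  finally show "cscale z (?a + cscale (w - z) ?b) - A (?a + cscale (w - z) ?b) = y"
    using eb by simp
qed

definition "rnorm z = onorm (R z)"

lemma rnorm_nonneg: "z \<in> U \<Longrightarrow> 0 \<le> rnorm z"
  unfolding rnorm_def by (rule onorm_pos_le[OF bounded_linear_resolvent])
lemma norm_resolvent_le: "z \<in> U \<Longrightarrow> norm (R z y) \<le> rnorm z * norm y"
  unfolding rnorm_def by (rule onorm[OF bounded_linear_resolvent])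

lemma norm_resolvent_difference_le:
  assumes z: "z \<in> U" and w: "w \<in> U"
  shows "norm (cscale (w - z) (R z (R w y))) \<le> 4 * cmod (w - z) * (rnorm z * (rnorm w * norm y))"
proof (rule order.trans[OF norm_cscale_le], rule mult_left_mono)
  show "norm (R z (R w y)) \<le> rnorm z * (rnorm w * norm y)"
    using rnorm_nonneg[OF z] by (intro order.trans[OF norm_resolvent_le[OF z]] mult_left_mono norm_resolvent_le[OF w])
qed simp

lemma rnorm_le_twice: assumes z: "z \<in> U" and w: "w \<in> U" and c: "8 * cmod (w - z) * (rnorm w + 1) \<le> 1"
  shows "rnorm z \<le> 2 * rnorm w"
proof -
  have nonneg: "0 \<le> rnorm w" "0 \<le> rnorm z" using rnorm_nonneg z w by auto
  have "onorm (R z) \<le> rnorm w + 4 * cmod (w - z) * rnorm z * rnorm w"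
  proof (rule onorm_bound)
    show "0 \<le> rnorm w + 4 * cmod (w - z) * rnorm z * rnorm w" using nonneg by simp
  next
    fix y
    have "norm (R z y) \<le> norm (R w y) + norm (cscale (w - z) (R z (R w y)))"
      by (subst resolvent_identity[OF z w]) (rule norm_triangle_ineq)
    also have "norm (cscale (w - z) (R z (R w y))) \<le> 4 * cmod (w - z) * (rnorm z * (rnorm w * norm y))"
      by (rule norm_resolvent_difference_le[OF z w])
    finally show "norm (R z y) \<le> (rnorm w + 4 * cmod (w - z) * rnorm z * rnorm w) * norm y"
      using norm_resolvent_le[OF w, of y] by (simp add: algebra_simps)
  qed
  then have "rnorm z \<le> rnorm w + 4 * cmod (w - z) * rnorm z * rnorm w" by (simp add: rnorm_def)
  also have "4 * cmod (w - z) * rnorm z * rnorm w \<le> rnorm z / 2"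
  proof -
    have "8 * cmod (w - z) * rnorm w \<le> 1" using c nonneg by (smt (verit) mult_left_mono norm_ge_zero)
    then have "(8 * cmod (w - z) * rnorm w) * rnorm z \<le> 1 * rnorm z" using nonneg by (intro mult_right_mono) auto
    then show ?thesis by (simp add: ac_simps)
  qed
  finally show ?thesis by simp
qed

lemma resolvent_lipschitz: assumes z: "z \<in> U" and w: "w \<in> U" and c: "8 * cmod (w - z) * (rnorm w + 1) \<le> 1"
  shows "norm (R z y - R w y) \<le> 8 * cmod (w - z) * (rnorm w)\<^sup>2 * norm y"
proof -
  have nonneg: "0 \<le> rnorm w" "0 \<le> rnorm z" using rnorm_nonneg z w by auto
  have "norm (R z y - R w y) = norm (cscale (w - z) (R z (R w y)))"
    by (subst resolvent_identity[OF z w]) simp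
  also have "\<dots> \<le> 4 * cmod (w - z) * (rnorm z * (rnorm w * norm y))"
    by (rule norm_resolvent_difference_le[OF z w])
  also have "\<dots> \<le> 4 * cmod (w - z) * ((2 * rnorm w) * (rnorm w * norm y))"
    by (intro mult_left_mono mult_right_mono rnorm_le_twice[OF z w c]) (auto simp: nonneg)
  finally show ?thesis by (simp add: power2_eq_square algebra_simps)
qed

lemma eventually_near_resolvent:
  assumes "open V" "V \<subseteq> U" "w \<in> V"
  shows "\<forall>\<^sub>F z in at w. z \<in> U \<and> 8 * cmod (w - z) * (rnorm w + 1) \<le> 1"
proof -
  have "\<forall>\<^sub>F z in at w. z \<in> V" using assms by (simp add: eventually_at_topological) blast
  moreover have "\<forall>\<^sub>F z in at w. dist z w < 1 / (8 * (rnorm w + 1))"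
    using rnorm_nonneg[of w] assms unfolding eventually_at by (intro exI[of _ "1 / (8 * (rnorm w + 1))"]) auto
  ultimately show ?thesis
  proof eventually_elim
    case (elim z)
    have p: "0 < rnorm w + 1" using rnorm_nonneg[of w] assms by auto
    have "cmod (w - z) * (8 * (rnorm w + 1)) \<le> 1"
      using elim(2) p by (simp add: dist_norm norm_minus_commute field_simps)
    then show ?case using elim assms by (auto simp: ac_simps)
  qed
qed

lemma tendsto_resolvent_comp:
  assumes V: "open V" "V \<subseteq> U" "w \<in> V" and F: "(F \<longlongrightarrow> F w) (at w)"
  shows "((\<lambda>z. R z (F z)) \<longlongrightarrow> R w (F w)) (at w)"
proof -
  have w: "w \<in> U" using V by auto
  let ?g = "\<lambda>z. 2 * rnorm w * norm (F z - F w) + 8 * cmod (w - z) * (rnorm w)\<^sup>2 * norm (F w)"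
  have "((\<lambda>z. R z (F z) - R w (F w)) \<longlongrightarrow> 0) (at w)"
  proof (rule Lim_null_comparison)
    show "\<forall>\<^sub>F z in at w. norm (R z (F z) - R w (F w)) \<le> ?g z"
      using eventually_near_resolvent[OF V]
    proof eventually_elim
      case (elim z)
      then have z: "z \<in> U" and c: "8 * cmod (w - z) * (rnorm w + 1) \<le> 1" by auto
      have eq: "R z (F z) - R w (F w) = R z (F z - F w) + (R z (F w) - R w (F w))"
        using linear_diff[OF bounded_linear.linear[OF bounded_linear_resolvent[OF z]]] by (simp add: algebra_simps)
      have "norm (R z (F z - F w)) \<le> rnorm z * norm (F z - F w)" by (rule norm_resolvent_le[OF z])
      also have "\<dots> \<le> 2 * rnorm w * norm (F z - F w)"
        by (intro mult_right_mono rnorm_le_twice[OF z w c]) auto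
      finally have 1: "norm (R z (F z - F w)) \<le> 2 * rnorm w * norm (F z - F w)" .
      show ?case unfolding eq using 1 resolvent_lipschitz[OF z w c, of "F w"]
        by (smt (verit) norm_triangle_ineq)
    qed
    have "(?g \<longlongrightarrow> 2 * rnorm w * norm (F w - F w) + 8 * cmod (w - w) * (rnorm w)\<^sup>2 * norm (F w)) (at w)"
      by (intro tendsto_intros F)
    then show "(?g \<longlongrightarrow> 0) (at w)" by simp
  qed
  then show ?thesis by (simp add: Lim_null[symmetric])
qed

lemma tendsto_resolvent:
  assumes V: "open V" "V \<subseteq> U" "w \<in> V"
  shows "((\<lambda>z. R z y) \<longlongrightarrow> R w y) (at w)"
  using tendsto_resolvent_comp[OF V, of "\<lambda>_. y"] by simp

lemma has_derivative_resolvent: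
  assumes V: "open V" "V \<subseteq> U" "w \<in> V"
  shows "((\<lambda>z. R z y) has_derivative (\<lambda>h. cscale h (- R w (R w y)))) (at w)"
  unfolding has_derivative_iff_norm
proof (intro conjI bounded_linear_cscale_left)
  have w: "w \<in> U" using V by auto
  let ?v = "R w y"
  let ?g = "\<lambda>z. 32 * cmod (w - z) * (rnorm w)\<^sup>2 * norm ?v"
  show "((\<lambda>z. norm (R z y - R w y - cscale (z - w) (- R w (R w y))) / norm (z - w)) \<longlongrightarrow> 0) (at w)"
  proof (rule Lim_null_comparison)
    have "\<forall>\<^sub>F z in at w. z \<noteq> w" by (simp add: eventually_at_filter)
    with eventually_near_resolvent[OF V]
    show "\<forall>\<^sub>F z in at w. norm (norm (R z y - R w y - cscale (z - w) (- R w (R w y))) / norm (z - w)) \<le> ?g z"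
    proof eventually_elim
      case (elim z)
      then have z: "z \<in> U" and c: "8 * cmod (w - z) * (rnorm w + 1) \<le> 1" and zw: "z \<noteq> w" by auto
      have "R z y - R w y - cscale (z - w) (- R w ?v) = cscale (w - z) (R z ?v - R w ?v)"
        by (subst resolvent_identity[OF z w]) (simp add: cscale_diff_commute[of z w] cscale_diff cscale_minus)
      moreover have "norm (cscale (w - z) (R z ?v - R w ?v))
          \<le> 4 * cmod (w - z) * (8 * cmod (w - z) * (rnorm w)\<^sup>2 * norm ?v)"
        by (rule order.trans[OF norm_cscale_le]) (intro mult_left_mono resolvent_lipschitz[OF z w c], auto)
      then have "norm (cscale (w - z) (R z ?v - R w ?v)) / cmod (z - w) \<le> ?g z"
        using zw by (simp add: divide_simps norm_minus_commute) (simp add: algebra_simps power2_eq_square)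
      ultimately show ?case by simp
    qed
    have "(?g \<longlongrightarrow> 32 * cmod (w - w) * (rnorm w)\<^sup>2 * norm ?v) (at w)"
      by (intro tendsto_intros)
    then show "(?g \<longlongrightarrow> 0) (at w)" by simp
  qed
qed

lemma closed_op_tendsto:
  assumes F: "F \<noteq> bot" and ev: "\<forall>\<^sub>F z in F. v z \<in> D"
    and lv: "(v \<longlongrightarrow> p) F" and la: "((\<lambda>z. A (v z)) \<longlongrightarrow> q) F"
  shows "p \<in> D \<and> A p = q"
proof -
  have "(p, q) \<in> {(u, A u) |u. u \<in> D}"
  proof (rule Lim_in_closed_set)
    show "closed {(u, A u) |u. u \<in> D}" using clo by (simp add: closed_op_def)
    show "\<forall>\<^sub>F z in F. (v z, A (v z)) \<in> {(u, A u) |u. u \<in> D}" using ev by eventually_elim blast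
    show "((\<lambda>z. (v z, A (v z))) \<longlongrightarrow> (p, q)) F" by (intro tendsto_Pair lv la)
  qed (rule F)
  then show ?thesis by auto
qed

lemma adj_eigen_resolvent:
  assumes \<phi>: "\<phi> \<in> adj_eigenspace A D l0" and z: "z \<in> U" and zl: "z \<noteq> l0"
  shows "\<phi> (R z x) = \<phi> x / (z - l0)"
proof -
  note p = adj_eigenspaceD[OF \<phi>]
  have "\<phi> x = \<phi> (cscale z (R z x) - A (R z x))" using resolvent_eq[OF z] by simp
  also have "\<dots> = z * \<phi> (R z x) - l0 * \<phi> (R z x)"
    using linear_diff[OF bounded_linear.linear[OF p(1)]] p(2) p(3)[OF resolvent_in_dom[OF z]] by simp
  finally show ?thesis using zl by (simp add: field_simps)
qed

end

section \<open>Laurent coefficients of the resolvent\<close>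

locale punctured_resolvent = closed_operator A D for A :: "'r::banach \<times> 'r \<Rightarrow> 'r \<times> 'r" and D +
  fixes l0 :: complex and e0 :: real
  assumes e0: "0 < e0" and sub: "ball l0 e0 - {l0} \<subseteq> resolvent_set A D"
begin

definition "V = ball l0 e0 - {l0}"
lemma open_V: "open V" unfolding V_def by (simp add: open_Diff)
lemma V_subset: "V \<subseteq> U" using sub V_def by simp

definition turn :: "real \<Rightarrow> complex" where "turn t = exp (2 * of_real pi * \<i> * of_real t)"
definition circle :: "real \<Rightarrow> real \<Rightarrow> complex" where "circle \<rho> t = l0 + of_real \<rho> * turn t"

lemma norm_turn[simp]: "cmod (turn t) = 1" by (simp add: turn_def norm_exp_eq_Re)
lemma turn_nonzero[simp]: "turn t \<noteq> 0" by (simp add: turn_def)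
lemma circle_minus_centre: "circle \<rho> t - l0 = of_real \<rho> * turn t" by (simp add: circle_def)
lemma norm_circle_minus_centre: "cmod (circle \<rho> t - l0) = \<bar>\<rho>\<bar>" by (simp add: circle_minus_centre norm_mult)
lemma circle_in_V: "0 < \<rho> \<Longrightarrow> \<rho> < e0 \<Longrightarrow> circle \<rho> t \<in> V"
  unfolding V_def using norm_circle_minus_centre[of \<rho> t] by (auto simp: dist_norm norm_minus_commute)
lemma circle_eq_circlepath: "circle \<rho> = circlepath l0 \<rho>" by (simp add: circlepath circle_def turn_def fun_eq_iff)
lemma circle_closed: "circle \<rho> 1 = circle \<rho> 0" by (simp add: circle_def turn_def)

lemma circle_radial_derivative: "((\<lambda>\<rho>. circle \<rho> t) has_vector_derivative turn t) (at \<rho> within S)"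
  unfolding circle_def by (auto intro!: derivative_eq_intros simp: has_vector_derivative_def scaleR_conv_of_real)
lemma circle_vector_derivative: "(circle \<rho> has_vector_derivative (2 * pi * \<i> * \<rho> * turn t)) (at t within S)"
  unfolding circle_eq_circlepath turn_def by (rule has_vector_derivative_circlepath)

definition "wres k x w = cscale ((w - l0) ^ Suc k) (R w x)"
definition "wres' k x w = cscale (of_nat (Suc k) * (w - l0) ^ k) (R w x) + cscale ((w - l0) ^ Suc k) (- R w (R w x))"

lemma has_derivative_wres: assumes w: "w \<in> V"
  shows "(wres k x has_derivative (\<lambda>h. cscale h (wres' k x w))) (at w)"
proof -
  have p: "((\<lambda>w. (w - l0) ^ Suc k) has_derivative (*) (of_nat (Suc k) * (w - l0) ^ k)) (at w)"
  proof -
    have "((\<lambda>w. (w - l0) ^ Suc k) has_field_derivative (of_nat (Suc k) * (w - l0) ^ (Suc k - 1) * 1)) (at w)"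
      by (intro DERIV_power derivative_eq_intros) auto
    then show ?thesis by (intro has_field_derivative_imp_has_derivative) simp
  qed
  have "((\<lambda>w. cscale ((w - l0) ^ Suc k) (R w x)) has_derivative
     (\<lambda>h. cscale ((w - l0) ^ Suc k) (cscale h (- R w (R w x))) + cscale (of_nat (Suc k) * (w - l0) ^ k * h) (R w x))) (at w)"
    by (rule bounded_bilinear.FDERIV[OF bounded_bilinear_cscale p has_derivative_resolvent[OF open_V V_subset w]])
  then show ?thesis unfolding wres_def[abs_def]
    by (rule has_derivative_eq_rhs) (simp add: fun_eq_iff wres'_def cscale_add cscale_cscale ac_simps)
qed

lemma continuous_on_resolvent: "continuous_on V (\<lambda>w. R w x)"
  by (rule continuous_at_imp_continuous_on) (auto simp: continuous_at intro: tendsto_resolvent[OF open_V V_subset])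
lemma continuous_on_resolvent_resolvent: "continuous_on V (\<lambda>w. R w (R w x))"
  by (rule continuous_at_imp_continuous_on)
     (auto simp: continuous_at intro!: tendsto_resolvent_comp[OF open_V V_subset] tendsto_resolvent[OF open_V V_subset])

lemma continuous_on_wres: "continuous_on V (wres k x)"
  unfolding wres_def[abs_def] by (intro continuous_intros continuous_on_resolvent)
lemma continuous_on_wres': "continuous_on V (wres' k x)"
  unfolding wres'_def[abs_def] by (intro continuous_intros continuous_on_resolvent continuous_on_resolvent_resolvent)

text \<open>Along the circle of radius \<open>\<rho>\<close>,
  \<open>(2\<pi>i)\<^sup>-\<^sup>1 (z - l0)\<^sup>k R(z) x dz = (\<rho> turn t)\<^sup>k\<^sup>+\<^sup>1 R(z) x dt\<close>.\<close>

definition "integrand k x \<rho> t = wres k x (circle \<rho> t)"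
definition "integrand' k x \<rho> t = cscale (turn t) (wres' k x (circle \<rho> t))"

lemma integrand_radial_derivative: assumes "0 < \<rho>" "\<rho> < e0"
  shows "((\<lambda>\<rho>. integrand k x \<rho> t) has_vector_derivative integrand' k x \<rho> t) (at \<rho> within S)"
proof -
  have "((\<lambda>\<rho>. wres k x (circle \<rho> t)) has_derivative
      (\<lambda>h. cscale (h *\<^sub>R turn t) (wres' k x (circle \<rho> t)))) (at \<rho> within S)"
    by (rule has_derivative_compose[OF circle_radial_derivative[unfolded has_vector_derivative_def]
          has_derivative_wres[OF circle_in_V[OF assms]]])
  then show ?thesis unfolding has_vector_derivative_def integrand_def integrand'_def
    by (rule has_derivative_eq_rhs) (simp add: cscale_scaleR_left fun_eq_iff)
qed

lemma integrand_vector_derivative: assumes "0 < \<rho>" "\<rho> < e0"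
  shows "(integrand k x \<rho> has_vector_derivative cscale (2 * pi * \<i> * \<rho>) (integrand' k x \<rho> t)) (at t within S)"
proof -
  have "((\<lambda>t. wres k x (circle \<rho> t)) has_derivative
      (\<lambda>h. cscale (h *\<^sub>R (2 * pi * \<i> * \<rho> * turn t)) (wres' k x (circle \<rho> t)))) (at t within S)"
    by (rule has_derivative_compose[OF circle_vector_derivative[unfolded has_vector_derivative_def]
          has_derivative_wres[OF circle_in_V[OF assms]]])
  then show ?thesis unfolding has_vector_derivative_def integrand_def[abs_def] integrand'_def
    by (rule has_derivative_eq_rhs) (simp add: cscale_scaleR_left fun_eq_iff cscale_cscale ac_simps)
qed

lemma continuous_on_integrand: assumes "0 < \<rho>" "\<rho> < e0" shows "continuous_on S (integrand k x \<rho>)"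
proof -
  have "continuous_on S (\<lambda>t. wres k x (circle \<rho> t))"
    by (rule continuous_on_compose2[OF continuous_on_wres, where f="circle \<rho>"])
       (use assms circle_in_V in \<open>auto simp: circle_def turn_def intro!: continuous_intros\<close>)
  then show ?thesis by (simp add: integrand_def[abs_def])
qed

lemma continuous_on_integrand': assumes "0 < a" "b < e0"
  shows "continuous_on ({a..b} \<times> S) (\<lambda>(\<rho>, t). integrand' k x \<rho> t)"
proof -
  have 1: "continuous_on ({a..b} \<times> S) (\<lambda>p. wres' k x (circle (fst p) (snd p)))"
    by (rule continuous_on_compose2[OF continuous_on_wres', where f="\<lambda>p. circle (fst p) (snd p)"])
       (use assms circle_in_V in \<open>auto simp: circle_def turn_def intro!: continuous_intros\<close>)
  have 2: "continuous_on ({a..b} \<times> S) (\<lambda>p. turn (snd p))"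
    by (auto simp: turn_def intro!: continuous_intros)
  show ?thesis unfolding integrand'_def split_beta by (intro continuous_on_cscale 1 2)
qed

lemma integrand'_integral_zero: assumes "0 < \<rho>" "\<rho> < e0"
  shows "((integrand' k x \<rho>) has_integral 0) {0..1}"
proof -
  have "((\<lambda>t. cscale (2 * pi * \<i> * \<rho>) (integrand' k x \<rho> t)) has_integral
      (integrand k x \<rho> 1 - integrand k x \<rho> 0)) {0..1}"
    by (rule fundamental_theorem_of_calculus) (simp, rule integrand_vector_derivative[OF assms])
  then have "((\<lambda>t. cscale (2 * pi * \<i> * \<rho>) (integrand' k x \<rho> t)) has_integral 0) {0..1}"
    by (simp add: integrand_def circle_closed)
  moreover have c: "inverse (2 * pi * \<i> * \<rho>) * (2 * pi * \<i> * \<rho>) = (1::complex)"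
    using assms by (intro left_inverse) auto
  ultimately have "((cscale (inverse (2 * pi * \<i> * \<rho>)) \<circ> (\<lambda>t. cscale (2 * pi * \<i> * \<rho>) (integrand' k x \<rho> t)))
      has_integral cscale (inverse (2 * pi * \<i> * \<rho>)) 0) {0..1}"
    by (intro has_integral_linear bounded_linear_cscale_right)
  then show ?thesis by (simp only: o_def cscale_cscale c cscale_one cscale_zero)
qed

text \<open>This replaces Cauchy's theorem, which is only available for scalar functions:
  the radial derivative of the integrand is its \<open>t\<close>-derivative divided by \<open>2\<pi>i\<rho>\<close>,
  whose integral over a period vanishes.\<close>

lemma integral_integrand_radius_independent: assumes "0 < a" "a \<le> b" "b < e0"
  shows "integral {0..1} (integrand k x a) = integral {0..1} (integrand k x b)"
proof -
  have "\<exists>c. \<forall>\<rho>\<in>{a..b}. integral (cbox 0 1) (integrand k x \<rho>) = c"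
  proof (rule has_derivative_zero_constant)
    fix \<rho> assume r: "\<rho> \<in> {a..b}"
    then have r0: "0 < \<rho>" "\<rho> < e0" using assms by auto
    have "((\<lambda>\<rho>. integral (cbox 0 1) (integrand k x \<rho>)) has_vector_derivative
        integral (cbox 0 1) (integrand' k x \<rho>)) (at \<rho> within {a..b})"
    proof (rule leibniz_rule_vector_derivative)
      show "((\<lambda>\<rho>. integrand k x \<rho> t) has_vector_derivative integrand' k x \<rho>' t) (at \<rho>' within {a..b})"
        if "\<rho>' \<in> {a..b}" "t \<in> cbox 0 1" for \<rho>' t
        using that assms by (intro integrand_radial_derivative) auto
      show "integrand k x \<rho>' integrable_on cbox 0 1" if "\<rho>' \<in> {a..b}" for \<rho>'
        using that assms by (intro integrable_continuous continuous_on_integrand) auto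
      show "continuous_on ({a..b} \<times> cbox 0 1) (\<lambda>(\<rho>, t). integrand' k x \<rho> t)"
        using assms by (intro continuous_on_integrand')
    qed (use r in auto)
    moreover have "integral (cbox 0 1) (integrand' k x \<rho>) = 0"
      using integrand'_integral_zero[OF r0] by (simp add: integral_unique)
    ultimately show "((\<lambda>\<rho>. integral (cbox 0 1) (integrand k x \<rho>)) has_derivative (\<lambda>h. 0))
        (at \<rho> within {a..b})"
      by (simp add: has_vector_derivative_def)
  qed simp
  then show ?thesis using assms by auto
qed

lemma integrand_has_integral: assumes "0 < \<rho>" "\<rho> < e0"
  shows "(integrand k x \<rho> has_integral integral {0..1} (integrand k x \<rho>)) {0..1}"
  using assms by (intro integrable_integral integrable_continuous_interval continuous_on_integrand)

lemma integrand_eq: "integrand k x \<rho> t = cscale ((of_real \<rho> * turn t) ^ Suc k) (R (circle \<rho> t) x)"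
  by (simp add: integrand_def wres_def circle_minus_centre)

definition "cauchy_kernel z0 \<rho> t = of_real \<rho> * turn t / (circle \<rho> t - z0)"

lemma has_integral_cauchy_kernel: assumes r: "0 < \<rho>" and nd: "cmod (z0 - l0) \<noteq> \<rho>"
  shows "(cauchy_kernel z0 \<rho> has_integral (if cmod (z0 - l0) < \<rho> then 1 else 0)) {0..1}"
proof -
  define I where "I = (if cmod (z0 - l0) < \<rho> then 1 else 0) * (2 * of_real pi * \<i>)"
  have ci: "((\<lambda>w. 1 / (w - z0)) has_contour_integral I) (circlepath l0 \<rho>)"
  proof (cases "cmod (z0 - l0) < \<rho>")
    case True
    then show ?thesis using Cauchy_integral_circlepath_simple[of "\<lambda>_. 1" l0 \<rho> z0]
      by (simp add: I_def)
  next
    case False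
    then have lt: "\<rho> < cmod (z0 - l0)" using nd by simp
    have "((\<lambda>w. 1 / (w - z0)) has_contour_integral 0) (circlepath l0 \<rho>)"
    proof (rule Cauchy_theorem_disc_simple[of _ l0 "cmod (z0 - l0)"])
      show "(\<lambda>w. 1 / (w - z0)) holomorphic_on ball l0 (cmod (z0 - l0))"
        by (intro holomorphic_intros) (auto simp: dist_norm norm_minus_commute)
      show "path_image (circlepath l0 \<rho>) \<subseteq> ball l0 (cmod (z0 - l0))"
        using r lt by (auto simp: sphere_def)
    qed auto
    then show ?thesis using False by (simp add: I_def)
  qed
  then have "((\<lambda>t. 1 / (circlepath l0 \<rho> t - z0) * (2 * pi * \<i> * \<rho> * turn t)) has_integral I) {0..1}"
    unfolding has_contour_integral vector_derivative_circlepath turn_def .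
  from has_integral_mult_right[OF this, of "inverse (2 * pi * \<i>)"]
  have "((\<lambda>t. inverse (2 * pi * \<i>) * (1 / (circlepath l0 \<rho> t - z0) * (2 * pi * \<i> * \<rho> * turn t)))
      has_integral inverse (2 * pi * \<i>) * I) {0..1}" .
  then show ?thesis
    by (rule has_integral_eq_rhs[OF has_integral_cong[THEN iffD1, rotated]])
       (auto simp: I_def cauchy_kernel_def circle_eq_circlepath[symmetric] field_simps)
qed

lemma norm_cauchy_kernel_le:
  assumes "0 < \<rho>" "0 < c" "c \<le> \<bar>cmod (z0 - l0) - \<rho>\<bar>"
  shows "cmod (cauchy_kernel z0 \<rho> t) \<le> \<rho> / c"
proof -
  have "\<bar>cmod (z0 - l0) - \<rho>\<bar> \<le> cmod ((z0 - l0) - (circle \<rho> t - l0))"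
    using norm_triangle_ineq3[of "z0 - l0" "circle \<rho> t - l0"] assms(1) by (simp add: norm_circle_minus_centre)
  then have "c \<le> cmod (circle \<rho> t - z0)"
    using assms(3) by (simp add: norm_minus_commute)
  then have "\<rho> / cmod (circle \<rho> t - z0) \<le> \<rho> / c"
    using assms(1,2) by (intro divide_left_mono) (auto intro!: mult_pos_pos)
  then show ?thesis
    using assms(1) by (simp add: cauchy_kernel_def norm_divide norm_mult)
qed

end

section \<open>Poles of finite order\<close>

locale bounded_pole = punctured_resolvent A D l0 e0 for A :: "'r::banach \<times> 'r \<Rightarrow> 'r \<times> 'r" and D l0 e0 +
  fixes n :: nat and M \<delta> :: real
  assumes \<delta>: "0 < \<delta>" "\<delta> \<le> e0" and M: "0 \<le> M"
    and bnd: "\<And>z y. 0 < cmod (z - l0) \<Longrightarrow> cmod (z - l0) < \<delta> \<Longrightarrow>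
         norm (cscale ((z - l0) ^ n) (R z y)) \<le> M * norm y"
begin

lemma norm_resolvent_le_pole: assumes "0 < cmod (z - l0)" "cmod (z - l0) < \<delta>"
  shows "norm (R z y) \<le> 4 * M * norm y / cmod (z - l0) ^ n"
proof -
  have nz: "(z - l0) ^ n \<noteq> 0" using assms by auto
  have "norm (R z y) = norm (cscale (inverse ((z - l0) ^ n)) (cscale ((z - l0) ^ n) (R z y)))"
    using nz by (simp add: cscale_inverse)
  also have "\<dots> \<le> 4 * cmod (inverse ((z - l0) ^ n)) * (M * norm y)"
    by (rule order.trans[OF norm_cscale_le]) (intro mult_left_mono bnd assms, auto)
  finally show ?thesis by (simp add: norm_inverse norm_power divide_inverse ac_simps)
qed

definition "r0 = \<delta> / 2"
lemma r0: "0 < r0" "r0 < \<delta>" "r0 < e0" using \<delta> by (auto simp: r0_def)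

text \<open>\<open>laurent_coeff k\<close> is the coefficient \<open>B\<^sub>k\<close> of \<open>(z - l0)\<^sup>-\<^sup>k\<^sup>-\<^sup>1\<close> in the Laurent expansion
  of the resolvent; the reference radius \<open>r0\<close> is immaterial.\<close>

definition "laurent_coeff k x = integral {0..1} (integrand k x r0)"

lemma has_integral_coeff: assumes "0 < \<rho>" "\<rho> < e0" shows "(integrand k x \<rho> has_integral laurent_coeff k x) {0..1}"
proof -
  have "integral {0..1} (integrand k x \<rho>) = laurent_coeff k x"
  proof (cases "\<rho> \<le> r0")
    case True
    show ?thesis unfolding laurent_coeff_def by (rule integral_integrand_radius_independent[OF assms(1) True r0(3)])
  next
    case False
    show ?thesis unfolding laurent_coeff_def
      by (rule sym, rule integral_integrand_radius_independent[OF r0(1) _ assms(2)]) (use False in simp)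
  qed
  then show ?thesis using integrand_has_integral[OF assms, of k x] by simp
qed

lemma coeff_vanish_high: assumes "n \<le> k" shows "laurent_coeff k x = 0"
proof (rule norm_le_linear_imp_zero[of "min \<delta> 1"])
  fix \<rho> :: real assume r: "0 < \<rho>" "\<rho> < min \<delta> 1"
  have re: "\<rho> < e0" using r \<delta> by auto
  have "norm (laurent_coeff k x) \<le> 16 * M * norm x * \<rho>"
  proof (rule has_integral_norm_bound01[OF has_integral_coeff[OF r(1) re]])
    show "0 \<le> 16 * M * norm x * \<rho>" using M r by simp
    fix t :: real
    have g: "0 < cmod (circle \<rho> t - l0)" "cmod (circle \<rho> t - l0) < \<delta>" using r by (auto simp: norm_circle_minus_centre)
    have "norm (integrand k x \<rho> t) \<le> 4 * cmod ((of_real \<rho> * turn t) ^ Suc k) * (4 * M * norm x / \<rho> ^ n)"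
      unfolding integrand_eq
      by (rule order.trans[OF norm_cscale_le])
        (intro mult_left_mono order.trans[OF norm_resolvent_le_pole[OF g]],
         auto simp: norm_circle_minus_centre r(1) less_imp_le)
    also have "\<dots> = 16 * M * norm x * (\<rho> ^ Suc k / \<rho> ^ n)"
      using r by (simp add: norm_mult norm_power)
    also have "\<rho> ^ Suc k / \<rho> ^ n = \<rho> ^ (Suc k - n)"
      using r assms by (simp add: power_diff)
    also have "\<rho> ^ (Suc k - n) \<le> \<rho> ^ 1"
      using r assms by (intro power_decreasing) auto
    finally show "norm (integrand k x \<rho> t) \<le> 16 * M * norm x * \<rho>"
      using M by (simp add: mult_left_mono)
  qed
  then show "norm (laurent_coeff k x) \<le> (16 * M * norm x) * \<rho>" by simp
qed (use \<delta> in auto)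

lemma has_integral_cauchy_resolvent:
  assumes z0: "0 < cmod (z0 - l0)" "cmod (z0 - l0) < e0"
    and r: "0 < \<rho>" "\<rho> < e0" "\<rho> \<noteq> cmod (z0 - l0)"
  shows "((\<lambda>t. cscale (cauchy_kernel z0 \<rho> t) (R (circle \<rho> t) x)) has_integral
           (if cmod (z0 - l0) < \<rho> then R z0 x else 0) - laurent_coeff 0 (R z0 x)) {0..1}"
proof -
  define y where "y = R z0 x"
  have z0U: "z0 \<in> U" using z0 V_subset by (auto simp: V_def dist_norm norm_minus_commute)
  have kernel_eq: "cscale (cauchy_kernel z0 \<rho> t) (R (circle \<rho> t) x)
      = cscale (cauchy_kernel z0 \<rho> t) y - integrand 0 y \<rho> t" for t
  proof -
    let ?w = "circle \<rho> t"
    have wU: "?w \<in> U" using circle_in_V[OF r(1,2)] V_subset by auto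
    have "?w \<noteq> z0" using r norm_circle_minus_centre[of \<rho> t] by auto
    then have k: "cauchy_kernel z0 \<rho> t * (z0 - ?w) = - (of_real \<rho> * turn t)"
      by (simp add: cauchy_kernel_def field_simps)
    have "R ?w x = y + cscale (z0 - ?w) (R ?w y)"
      unfolding y_def by (rule resolvent_identity[OF wU z0U])
    then show ?thesis by (simp add: k cscale_add cscale_cscale cscale_minus_left integrand_eq)
  qed
  have "((\<lambda>t. cscale (cauchy_kernel z0 \<rho> t) y) has_integral cscale (if cmod (z0 - l0) < \<rho> then 1 else 0) y) {0..1}"
    using has_integral_linear[OF has_integral_cauchy_kernel[OF r(1)] bounded_linear_cscale_left[of y]] r(3)
    by (simp add: o_def)
  from has_integral_diff[OF this has_integral_coeff[OF r(1,2), of 0 y]]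
  have "((\<lambda>t. cscale (cauchy_kernel z0 \<rho> t) (R (circle \<rho> t) x)) has_integral
           cscale (if cmod (z0 - l0) < \<rho> then 1 else 0) y - laurent_coeff 0 y) {0..1}"
    by (rule has_integral_eq[rotated]) (simp add: kernel_eq)
  then show ?thesis by (cases "cmod (z0 - l0) < \<rho>") (simp_all add: y_def)
qed

lemma has_integral_principal_part:
  assumes z0: "0 < cmod (z0 - l0)" "cmod (z0 - l0) < r0" and r: "0 < \<rho>" "\<rho> < cmod (z0 - l0)"
  shows "((\<lambda>t. cscale ((of_real \<rho> * turn t) ^ Suc n / (circle \<rho> t - z0)) (R (circle \<rho> t) x)) has_integral
           cscale ((z0 - l0) ^ n)
             ((\<Sum>k<n. cscale (inverse ((z0 - l0) ^ Suc k)) (laurent_coeff k x)) - laurent_coeff 0 (R z0 x))) {0..1}"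
proof -
  define a where "a = z0 - l0"
  have a0: "a \<noteq> 0" using z0 by (auto simp: a_def)
  have re: "\<rho> < e0" "\<rho> \<noteq> cmod (z0 - l0)" using r z0 r0 by auto
  have integrand_split: "cscale ((of_real \<rho> * turn t) ^ Suc n / (circle \<rho> t - z0)) (R (circle \<rho> t) x)
      = cscale (a ^ n) (cscale (cauchy_kernel z0 \<rho> t) (R (circle \<rho> t) x)
          + (\<Sum>k<n. cscale (inverse (a ^ Suc k)) (integrand k x \<rho> t)))" for t
  proof -
    let ?s = "of_real \<rho> * turn t"
    have sa: "circle \<rho> t - z0 = ?s - a" by (simp add: circle_def a_def)
    have "cmod ?s = \<rho>" using r by (simp add: norm_mult)
    then have sa0: "?s \<noteq> a" using r by (auto simp: a_def)
    have "cauchy_kernel z0 \<rho> t + (\<Sum>k<n. ?s ^ Suc k / a ^ Suc k) = ?s ^ Suc n / (a ^ n * (?s - a))"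
      unfolding cauchy_kernel_def sa geometric_partial_fraction[OF a0 sa0, of n] by simp
    moreover have "cscale (cauchy_kernel z0 \<rho> t) (R (circle \<rho> t) x)
          + (\<Sum>k<n. cscale (inverse (a ^ Suc k)) (integrand k x \<rho> t))
        = cscale (cauchy_kernel z0 \<rho> t + (\<Sum>k<n. ?s ^ Suc k / a ^ Suc k)) (R (circle \<rho> t) x)"
      by (simp add: integrand_eq cscale_cscale cscale_add_left cscale_sum_left divide_inverse ac_simps)
    ultimately show ?thesis using a0 by (simp add: cscale_cscale sa)
  qed
  have "((\<lambda>t. cscale (cauchy_kernel z0 \<rho> t) (R (circle \<rho> t) x)
            + (\<Sum>k<n. cscale (inverse (a ^ Suc k)) (integrand k x \<rho> t))) has_integral
         (- laurent_coeff 0 (R z0 x) + (\<Sum>k<n. cscale (inverse (a ^ Suc k)) (laurent_coeff k x)))) {0..1}"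
  proof (rule has_integral_add)
    show "((\<lambda>t. cscale (cauchy_kernel z0 \<rho> t) (R (circle \<rho> t) x)) has_integral - laurent_coeff 0 (R z0 x)) {0..1}"
      using has_integral_cauchy_resolvent[OF z0(1) _ r(1) re, of x] z0 r r0 by simp
    show "((\<lambda>t. \<Sum>k<n. cscale (inverse (a ^ Suc k)) (integrand k x \<rho> t)) has_integral
           (\<Sum>k<n. cscale (inverse (a ^ Suc k)) (laurent_coeff k x))) {0..1}"
      by (intro has_integral_sum finite_lessThan ballI)
         (rule has_integral_linear[OF has_integral_coeff[OF r(1) re(1)] bounded_linear_cscale_right, unfolded o_def])
  qed
  from has_integral_linear[OF this bounded_linear_cscale_right[of "a ^ n"]]
  show ?thesis unfolding a_def[symmetric] integrand_split by (simp add: o_def algebra_simps)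
qed

text \<open>On circles of radius \<open>\<rho> < cmod (z0 - l0)\<close> the integrand in has_integral_principal_part is
  \<open>O(\<rho>)\<close>, so its integral vanishes.\<close>

lemma principal_part_eq_coeff0_resolvent:
  assumes z0: "0 < cmod (z0 - l0)" "cmod (z0 - l0) < r0"
  shows "(\<Sum>k<n. cscale (inverse ((z0 - l0) ^ Suc k)) (laurent_coeff k x)) = laurent_coeff 0 (R z0 x)"
proof -
  define d where "d = cmod (z0 - l0)"
  define Z where "Z = (\<Sum>k<n. cscale (inverse ((z0 - l0) ^ Suc k)) (laurent_coeff k x)) - laurent_coeff 0 (R z0 x)"
  have "cscale ((z0 - l0) ^ n) Z = 0"
  proof (rule norm_le_linear_imp_zero[of "d / 2"])
    show "0 < d / 2" using z0 by (simp add: d_def)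
    fix \<rho> :: real assume r: "0 < \<rho>" "\<rho> < d / 2"
    then have r': "\<rho> < cmod (z0 - l0)" by (simp add: d_def)
    show "norm (cscale ((z0 - l0) ^ n) Z) \<le> (8 * M * norm x / d) * \<rho>"
      unfolding Z_def
    proof (rule has_integral_norm_bound01[OF has_integral_principal_part[OF z0 r(1) r']])
      show "0 \<le> 8 * M * norm x / d * \<rho>" using M z0 r by (simp add: d_def)
      fix t :: real
      have g: "0 < cmod (circle \<rho> t - l0)" "cmod (circle \<rho> t - l0) < \<delta>"
        using r z0 r0 by (auto simp: norm_circle_minus_centre d_def)
      have "cscale ((of_real \<rho> * turn t) ^ Suc n / (circle \<rho> t - z0)) (R (circle \<rho> t) x)
          = cscale (cauchy_kernel z0 \<rho> t) (cscale ((circle \<rho> t - l0) ^ n) (R (circle \<rho> t) x))"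
        by (simp add: cauchy_kernel_def cscale_cscale circle_minus_centre power_Suc ac_simps)
      also have "norm \<dots> \<le> 4 * cmod (cauchy_kernel z0 \<rho> t) * (M * norm x)"
        by (rule order.trans[OF norm_cscale_le]) (intro mult_left_mono bnd g, auto)
      also have "\<dots> \<le> 4 * (\<rho> / (d / 2)) * (M * norm x)"
        using M r z0 by (intro mult_right_mono mult_left_mono norm_cauchy_kernel_le) (auto simp: d_def)
      finally show "norm (cscale ((of_real \<rho> * turn t) ^ Suc n / (circle \<rho> t - z0)) (R (circle \<rho> t) x))
          \<le> 8 * M * norm x / d * \<rho>" by (simp add: field_simps)
    qed
  qed
  then show ?thesis using z0 cscale_inverse[of "(z0 - l0) ^ n" Z] by (simp add: Z_def)
qed

lemma norm_resolvent_minus_coeff0_resolvent: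
  assumes z0: "0 < cmod (z0 - l0)" "cmod (z0 - l0) < r0 / 2"
  shows "norm (R z0 x - laurent_coeff 0 (R z0 x)) \<le> 32 * M / r0 ^ n * norm x"
proof (rule has_integral_norm_bound01)
  show "((\<lambda>t. cscale (cauchy_kernel z0 r0 t) (R (circle r0 t) x)) has_integral R z0 x - laurent_coeff 0 (R z0 x)) {0..1}"
    using has_integral_cauchy_resolvent[of z0 r0 x] z0 r0 by simp
  show "0 \<le> 32 * M / r0 ^ n * norm x" using M r0 by simp
  fix t :: real
  have g: "0 < cmod (circle r0 t - l0)" "cmod (circle r0 t - l0) < \<delta>"
    using r0 by (auto simp: norm_circle_minus_centre)
  have "norm (cscale (cauchy_kernel z0 r0 t) (R (circle r0 t) x))
      \<le> 4 * cmod (cauchy_kernel z0 r0 t) * (4 * M * norm x / cmod (circle r0 t - l0) ^ n)"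
    by (rule order.trans[OF norm_cscale_le]) (intro mult_left_mono norm_resolvent_le_pole g, auto)
  also have "\<dots> = 4 * cmod (cauchy_kernel z0 r0 t) * (4 * M * norm x / r0 ^ n)"
    using r0 by (simp add: norm_circle_minus_centre)
  also have "\<dots> \<le> 4 * (r0 / (r0 / 2)) * (4 * M * norm x / r0 ^ n)"
  proof (intro mult_right_mono mult_left_mono norm_cauchy_kernel_le)
    show "r0 / 2 \<le> \<bar>cmod (z0 - l0) - r0\<bar>" using z0 by (simp add: abs_if)
  qed (use M r0 in auto)
  finally show "norm (cscale (cauchy_kernel z0 r0 t) (R (circle r0 t) x)) \<le> 32 * M / r0 ^ n * norm x"
    using r0 by simp
qed

lemma norm_resolvent_minus_principal_part:
  assumes "0 < cmod (z0 - l0)" "cmod (z0 - l0) < r0 / 2"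
  shows "norm (R z0 x - (\<Sum>k<n. cscale (inverse ((z0 - l0) ^ Suc k)) (laurent_coeff k x))) \<le> 32 * M / r0 ^ n * norm x"
  using norm_resolvent_minus_coeff0_resolvent[OF assms] principal_part_eq_coeff0_resolvent[of z0 x] assms r0
  by simp

lemma coeff_add: "laurent_coeff k (x + y) = laurent_coeff k x + laurent_coeff k y"
proof -
  have "(integrand k (x + y) r0 has_integral laurent_coeff k x + laurent_coeff k y) {0..1}"
  proof (rule has_integral_eq[OF _ has_integral_add[OF has_integral_coeff[OF r0(1,3)] has_integral_coeff[OF r0(1,3)]]])
    fix t
    have "circle r0 t \<in> U" using circle_in_V[OF r0(1,3)] V_subset by auto
    then show "integrand k x r0 t + integrand k y r0 t = integrand k (x + y) r0 t"
      by (simp add: integrand_eq linear_add[OF bounded_linear.linear[OF bounded_linear_resolvent]] cscale_add)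
  qed
  then show ?thesis using has_integral_coeff[OF r0(1,3), of k "x + y"] by (rule has_integral_unique[symmetric])
qed

lemma coeff_cscale: "laurent_coeff k (cscale c x) = cscale c (laurent_coeff k x)"
proof -
  have "(integrand k (cscale c x) r0 has_integral cscale c (laurent_coeff k x)) {0..1}"
  proof (rule has_integral_eq[OF _ has_integral_linear[OF has_integral_coeff[OF r0(1,3)] bounded_linear_cscale_right, unfolded o_def]])
    fix t
    have "circle r0 t \<in> U" using circle_in_V[OF r0(1,3)] V_subset by auto
    then show "cscale c (integrand k x r0 t) = integrand k (cscale c x) r0 t"
      by (simp add: integrand_eq resolvent_cscale cscale_commute)
  qed
  then show ?thesis using has_integral_coeff[OF r0(1,3), of k "cscale c x"] by (rule has_integral_unique[symmetric])
qed

lemma norm_coeff0_le: "norm (laurent_coeff 0 x) \<le> 16 * M * r0 / r0 ^ n * norm x"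
proof (rule has_integral_norm_bound01[OF has_integral_coeff[OF r0(1,3)]])
  show "0 \<le> 16 * M * r0 / r0 ^ n * norm x" using M r0 by simp
  fix t :: real
  have g: "0 < cmod (circle r0 t - l0)" "cmod (circle r0 t - l0) < \<delta>" using r0 by (auto simp: norm_circle_minus_centre)
  have "norm (integrand 0 x r0 t) \<le> 4 * cmod ((of_real r0 * turn t) ^ Suc 0) * (4 * M * norm x / cmod (circle r0 t - l0) ^ n)"
    unfolding integrand_eq by (rule order.trans[OF norm_cscale_le]) (intro mult_left_mono norm_resolvent_le_pole g, auto)
  also have "\<dots> = 16 * M * r0 / r0 ^ n * norm x" using r0 by (simp add: norm_circle_minus_centre norm_mult)
  finally show "norm (integrand 0 x r0 t) \<le> 16 * M * r0 / r0 ^ n * norm x" .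
qed

lemma bounded_linear_coeff0: "bounded_linear (laurent_coeff 0)"
proof (rule bounded_linear_intro[of _ "16 * M * r0 / r0 ^ n"])
  show "laurent_coeff 0 (x + y) = laurent_coeff 0 x + laurent_coeff 0 y" for x y by (rule coeff_add)
  show "laurent_coeff 0 (r *\<^sub>R x) = r *\<^sub>R laurent_coeff 0 x" for r x
    using coeff_cscale[of 0 "of_real r" x] by (simp add: cscale_of_real)
  show "norm (laurent_coeff 0 x) \<le> norm x * (16 * M * r0 / r0 ^ n)" for x using norm_coeff0_le[of x] by (simp add: ac_simps)
qed

lemma eventually_small_punctured: "\<forall>\<^sub>F z in at l0. 0 < cmod (z - l0) \<and> cmod (z - l0) < r0 / 2 \<and> z \<in> V"
  unfolding eventually_at using r0 \<delta>
  by (intro exI[of _ "r0 / 2"]) (auto simp: dist_norm V_def norm_minus_commute)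

lemma scaled_principal_part_eq:
  assumes "z \<noteq> l0" and hi: "\<And>k. m < k \<Longrightarrow> laurent_coeff k x = 0"
  shows "cscale ((z - l0) ^ Suc m) (\<Sum>k<n. cscale (inverse ((z - l0) ^ Suc k)) (laurent_coeff k x))
       = (\<Sum>k<n. cscale (if k \<le> m then (z - l0) ^ (m - k) else 0) (laurent_coeff k x))"
  unfolding cscale_sum
proof (rule sum.cong[OF refl])
  fix k
  show "cscale ((z - l0) ^ Suc m) (cscale (inverse ((z - l0) ^ Suc k)) (laurent_coeff k x))
      = cscale (if k \<le> m then (z - l0) ^ (m - k) else 0) (laurent_coeff k x)"
  proof (cases "k \<le> m")
    case True
    have "(z - l0) ^ Suc m * inverse ((z - l0) ^ Suc k) = (z - l0) ^ (m - k)"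
      using assms(1) True by (simp add: power_diff[symmetric] divide_inverse[symmetric])
    then show ?thesis using True by (simp add: cscale_cscale)
  next
    case False
    then show ?thesis using hi[of k] by simp
  qed
qed

lemma tendsto_scaled_principal_part:
  "((\<lambda>z. \<Sum>k<n. cscale (if k \<le> m then (z - l0) ^ (m - k) else 0) (laurent_coeff k x))
     \<longlongrightarrow> laurent_coeff m x) (at l0)"
proof -
  define P where "P z = (\<Sum>k<n. cscale (if k \<le> m then (z - l0) ^ (m - k) else 0) (laurent_coeff k x))" for z
  have "continuous_on UNIV P"
    unfolding P_def
  proof (intro continuous_intros)
    fix k
    show "continuous_on UNIV (\<lambda>z. if k \<le> m then (z - l0) ^ (m - k) else 0)"
      by (cases "k \<le> m") (auto intro!: continuous_intros)
  qed
  moreover have "P l0 = laurent_coeff m x"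
  proof (cases "m < n")
    case True
    have "P l0 = (\<Sum>k<n. if k = m then laurent_coeff k x else 0)"
      unfolding P_def by (rule sum.cong) (auto simp: le_less power_0_left)
    then show ?thesis using True by simp
  next
    case False
    have "P l0 = (\<Sum>k<n. 0)"
      unfolding P_def by (rule sum.cong) (use False in \<open>auto simp: power_0_left\<close>)
    then show ?thesis using False coeff_vanish_high[of m x] by simp
  qed
  ultimately show ?thesis unfolding P_def[symmetric] by (metis continuous_on_def iso_tuple_UNIV_I)
qed

lemma tendsto_coeff_top:
  assumes hi: "\<And>k. m < k \<Longrightarrow> laurent_coeff k x = 0"
  shows "((\<lambda>z. cscale ((z - l0) ^ Suc m) (R z x)) \<longlongrightarrow> laurent_coeff m x) (at l0)"
proof -
  define C where "C = 4 * (32 * M / r0 ^ n * norm x)"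
  define P where "P z = (\<Sum>k<n. cscale (if k \<le> m then (z - l0) ^ (m - k) else 0) (laurent_coeff k x))" for z
  have "((\<lambda>z. cscale ((z - l0) ^ Suc m) (R z x) - P z) \<longlongrightarrow> 0) (at l0)"
  proof (rule Lim_null_comparison)
    show "\<forall>\<^sub>F z in at l0. norm (cscale ((z - l0) ^ Suc m) (R z x) - P z) \<le> cmod (z - l0) ^ Suc m * C"
      using eventually_small_punctured
    proof eventually_elim
      case (elim z)
      then have "cscale ((z - l0) ^ Suc m) (R z x) - P z
          = cscale ((z - l0) ^ Suc m) (R z x - (\<Sum>k<n. cscale (inverse ((z - l0) ^ Suc k)) (laurent_coeff k x)))"
        using scaled_principal_part_eq[of z m x] hi by (auto simp: P_def cscale_diff)
      also have "norm \<dots> \<le> 4 * cmod ((z - l0) ^ Suc m) * (32 * M / r0 ^ n * norm x)"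
        using elim by (intro order.trans[OF norm_cscale_le] mult_left_mono norm_resolvent_minus_principal_part) auto
      finally show ?case by (simp add: C_def norm_mult norm_power ac_simps)
    qed
    show "((\<lambda>z. cmod (z - l0) ^ Suc m * C) \<longlongrightarrow> 0) (at l0)"
      by (rule tendsto_eq_intros refl | simp)+
  qed
  from tendsto_add[OF this tendsto_scaled_principal_part[of m x, folded P_def]]
  show ?thesis by simp
qed

end

lemma resolvent_pole_imp_bounded_pole:
  assumes "closed_operator A D" and pole: "resolvent_pole A D l0"
  obtains e0 n M \<delta> where "bounded_pole A D l0 e0 n M \<delta>"
proof -
  interpret closed_operator A D by fact
  obtain e0 where e0: "0 < e0" "ball l0 e0 - {l0} \<subseteq> U"
    using pole by (auto simp: resolvent_pole_def)
  obtain n L where lim: "((\<lambda>z. Blinfun (\<lambda>y. cscale ((z - l0) ^ n) (R z y))) \<longlongrightarrow> L) (at l0)"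
    using pole by (auto simp: resolvent_pole_def)
  define M where "M = norm L + 1"
  have "\<forall>\<^sub>F z in at l0. norm (Blinfun (\<lambda>y. cscale ((z - l0) ^ n) (R z y))) < M"
    using order_tendstoD(2)[OF tendsto_norm[OF lim], of M] by (simp add: M_def)
  then obtain d where d: "0 < d"
    "\<And>z. z \<noteq> l0 \<Longrightarrow> dist z l0 < d \<Longrightarrow> norm (Blinfun (\<lambda>y. cscale ((z - l0) ^ n) (R z y))) < M"
    unfolding eventually_at by auto
  have "bounded_pole A D l0 e0 n M (min d e0)"
  proof unfold_locales
    show "0 < e0" "ball l0 e0 - {l0} \<subseteq> U" "0 < min d e0" "min d e0 \<le> e0" "0 \<le> M"
      using d e0 by (auto simp: M_def add_nonneg_nonneg)
    fix z y assume z: "0 < cmod (z - l0)" "cmod (z - l0) < min d e0"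
    then have zU: "z \<in> U" using e0 by (auto simp: dist_norm norm_minus_commute)
    have bl: "bounded_linear (\<lambda>y. cscale ((z - l0) ^ n) (R z y))"
      using bounded_linear_compose[OF bounded_linear_cscale_right bounded_linear_resolvent[OF zU]]
      by (simp add: o_def)
    have "norm (cscale ((z - l0) ^ n) (R z y))
        \<le> norm (Blinfun (\<lambda>y. cscale ((z - l0) ^ n) (R z y))) * norm y"
      using norm_blinfun[of "Blinfun (\<lambda>y. cscale ((z - l0) ^ n) (R z y))" y]
      by (simp add: bounded_linear_Blinfun_apply[OF bl])
    also have "\<dots> \<le> M * norm y"
      using d(2)[of z] z by (intro mult_right_mono) (auto simp: dist_norm less_imp_le)
    finally show "norm (cscale ((z - l0) ^ n) (R z y)) \<le> M * norm y" .
  qed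
  then show thesis by (rule that)
qed

section \<open>Simplicity of the pole\<close>

locale simple_pole = bounded_pole A D l0 e0 n M \<delta> for A :: "'r::banach \<times> 'r \<Rightarrow> 'r \<times> 'r" and D l0 e0 n M \<delta> +
  fixes u :: "'r \<times> 'r" and \<phi> :: "'r \<times> 'r \<Rightarrow> complex"
  assumes ker: "eigenspace_op A D l0 = range (\<lambda>c. cscale c u)"
    and phi: "\<phi> \<in> adj_eigenspace A D l0" and phiu: "\<phi> u \<noteq> 0"
begin

lemma eventually_V: "\<forall>\<^sub>F z in at l0. z \<in> V \<and> z \<noteq> l0"
  using eventually_small_punctured by eventually_elim (auto simp: V_def)

lemma coeff_top_in_eigenspace:
  assumes hi: "\<And>k. m < k \<Longrightarrow> laurent_coeff k x = 0"
  shows "laurent_coeff m x \<in> eigenspace_op A D l0"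
proof -
  define v where "v z = cscale ((z - l0) ^ Suc m) (R z x)" for z
  have lv: "(v \<longlongrightarrow> laurent_coeff m x) (at l0)" unfolding v_def by (rule tendsto_coeff_top[OF hi])
  have evD: "\<forall>\<^sub>F z in at l0. v z \<in> D"
    using eventually_V by eventually_elim (use V_subset in \<open>auto simp: v_def intro!: dom_cscale resolvent_in_dom\<close>)
  have evA: "\<forall>\<^sub>F z in at l0. cscale z (v z) - cscale ((z - l0) ^ Suc m) x = A (v z)"
    using eventually_V
  proof eventually_elim
    case (elim z)
    then have z: "z \<in> U" using V_subset by auto
    have "A (R z x) = cscale z (R z x) - x" using resolvent_eq[OF z, of x] by (simp add: algebra_simps)
    then show ?case by (simp add: v_def op_cscale[OF resolvent_in_dom[OF z]] cscale_diff cscale_commute)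
  qed
  have "((\<lambda>z. cscale z (v z) - cscale ((z - l0) ^ Suc m) x)
      \<longlongrightarrow> cscale l0 (laurent_coeff m x) - cscale ((l0 - l0) ^ Suc m) x) (at l0)"
    by (intro tendsto_intros lv)
  from Lim_transform_eventually[OF this evA]
  have la: "((\<lambda>z. A (v z)) \<longlongrightarrow> cscale l0 (laurent_coeff m x)) (at l0)" by simp
  from closed_op_tendsto[OF at_neq_bot evD lv la]
  show ?thesis by (simp add: eigenspace_op_def)
qed

lemma adj_eigen_coeff_top:
  assumes hi: "\<And>k. m < k \<Longrightarrow> laurent_coeff k x = 0"
  shows "\<phi> (laurent_coeff m x) = 0 ^ m * \<phi> x"
proof -
  note p = adj_eigenspaceD[OF phi]
  define v where "v z = cscale ((z - l0) ^ Suc m) (R z x)" for z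
  have l1: "((\<lambda>z. \<phi> (v z)) \<longlongrightarrow> \<phi> (laurent_coeff m x)) (at l0)"
    unfolding v_def by (rule bounded_linear.tendsto[OF p(1) tendsto_coeff_top[OF hi]])
  have ev: "\<forall>\<^sub>F z in at l0. (z - l0) ^ m * \<phi> x = \<phi> (v z)"
    using eventually_V
  proof eventually_elim
    case (elim z)
    then have z: "z \<in> U" "z \<noteq> l0" using V_subset by auto
    show ?case unfolding v_def p(2) adj_eigen_resolvent[OF phi z] using z(2) by (simp add: field_simps)
  qed
  have "((\<lambda>z. (z - l0) ^ m * \<phi> x) \<longlongrightarrow> (l0 - l0) ^ m * \<phi> x) (at l0)" by (intro tendsto_intros)
  from Lim_transform_eventually[OF this ev]
  have l2: "((\<lambda>z. \<phi> (v z)) \<longlongrightarrow> 0 ^ m * \<phi> x) (at l0)" by simp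
  show ?thesis using tendsto_unique[OF at_neq_bot l1 l2] .
qed

lemma coeff_top_zero:
  assumes m: "1 \<le> m" and hi: "\<And>k. m < k \<Longrightarrow> laurent_coeff k x = 0"
  shows "laurent_coeff m x = 0"
proof -
  obtain c where c: "laurent_coeff m x = cscale c u" using coeff_top_in_eigenspace[OF hi] ker by auto
  have "\<phi> (laurent_coeff m x) = 0" using adj_eigen_coeff_top[of m x, OF hi] m by (simp add: power_0_left)
  then have "c * \<phi> u = 0" using adj_eigenspaceD(2)[OF phi] c by simp
  then have "c = 0" using phiu by simp
  then show ?thesis using c by simp
qed

lemma coeff_higher_zero: assumes "1 \<le> m" shows "laurent_coeff m x = 0"
  using assms
proof (induction "n - m" arbitrary: m rule: less_induct)
  case less
  show ?case
  proof (rule coeff_top_zero[OF less.prems])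
    fix k assume "m < k"
    show "laurent_coeff k x = 0"
    proof (cases "n \<le> k")
      case True
      then show ?thesis by (rule coeff_vanish_high)
    next
      case False
      then show ?thesis using less.hyps[of k] \<open>m < k\<close> less.prems by auto
    qed
  qed
qed

lemma principal_part_simple: "(\<Sum>k<n. cscale (inverse (a ^ Suc k)) (laurent_coeff k x)) = cscale (inverse a) (laurent_coeff 0 x)"
proof (cases "n = 0")
  case True then show ?thesis using coeff_vanish_high[of 0 x] by simp
next
  case False
  have "(\<Sum>k<n. cscale (inverse (a ^ Suc k)) (laurent_coeff k x))
      = (\<Sum>k<n. if k = 0 then cscale (inverse a) (laurent_coeff 0 x) else 0)"
    by (rule sum.cong) (auto simp: coeff_higher_zero)
  then show ?thesis using False by simp
qed

lemma norm_residue_remainder: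
  assumes "0 < cmod (z - l0)" "cmod (z - l0) < r0 / 2"
  shows "norm (cscale (z - l0) (R z x) - laurent_coeff 0 x) \<le> 4 * cmod (z - l0) * (32 * M / r0 ^ n * norm x)"
proof -
  have nz: "z - l0 \<noteq> 0" using assms by auto
  have "cscale (z - l0) (R z x) - laurent_coeff 0 x
      = cscale (z - l0) (R z x - (\<Sum>k<n. cscale (inverse ((z - l0) ^ Suc k)) (laurent_coeff k x)))"
    using nz by (simp only: principal_part_simple) (simp add: cscale_diff cscale_cscale)
  also have "norm \<dots> \<le> 4 * cmod (z - l0) * (32 * M / r0 ^ n * norm x)"
    by (rule order.trans[OF norm_cscale_le]) (intro mult_left_mono norm_resolvent_minus_principal_part assms, simp)
  finally show ?thesis .
qed

lemma tendsto_residue: "((\<lambda>z. Blinfun (\<lambda>y. cscale (z - l0) (R z y))) \<longlongrightarrow> Blinfun (laurent_coeff 0)) (at l0)"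
proof -
  define C where "C = 4 * (32 * M / r0 ^ n)"
  have C: "0 \<le> C" using M r0 by (simp add: C_def)
  have "((\<lambda>z. Blinfun (\<lambda>y. cscale (z - l0) (R z y)) - Blinfun (laurent_coeff 0)) \<longlongrightarrow> 0) (at l0)"
  proof (rule Lim_null_comparison)
    show "\<forall>\<^sub>F z in at l0. norm (Blinfun (\<lambda>y. cscale (z - l0) (R z y)) - Blinfun (laurent_coeff 0)) \<le> C * cmod (z - l0)"
      using eventually_small_punctured
    proof eventually_elim
      case (elim z)
      then have z: "z \<in> U" using V_subset by auto
      have bl: "bounded_linear (\<lambda>y. cscale (z - l0) (R z y))"
        using bounded_linear_compose[OF bounded_linear_cscale_right bounded_linear_resolvent[OF z]] by (simp add: o_def)
      show ?case
      proof (rule norm_blinfun_bound)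
        show "0 \<le> C * cmod (z - l0)" using C by simp
        fix y
        show "norm (blinfun_apply (Blinfun (\<lambda>y. cscale (z - l0) (R z y)) - Blinfun (laurent_coeff 0)) y) \<le> C * cmod (z - l0) * norm y"
          using norm_residue_remainder[of z y] elim
          by (simp add: blinfun.diff_left bounded_linear_Blinfun_apply[OF bl] bounded_linear_Blinfun_apply[OF bounded_linear_coeff0] C_def ac_simps)
      qed
    qed
    have "((\<lambda>z. C * cmod (z - l0)) \<longlongrightarrow> C * cmod (l0 - l0)) (at l0)" by (intro tendsto_intros)
    then show "((\<lambda>z. C * cmod (z - l0)) \<longlongrightarrow> 0) (at l0)" by simp
  qed
  then show ?thesis by (simp add: Lim_null[symmetric])
qed

lemma residue_in_eigenspace: "laurent_coeff 0 x \<in> eigenspace_op A D l0"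
  by (rule coeff_top_in_eigenspace) (simp add: coeff_higher_zero)

lemma adj_eigen_residue: "\<phi> (laurent_coeff 0 x) = \<phi> x"
  using adj_eigen_coeff_top[of 0 x] coeff_higher_zero by simp

lemma u_in_eigenspace: "u \<in> eigenspace_op A D l0" using ker by (metis cscale_one rangeI)

lemma residue_u: "laurent_coeff 0 u = u"
proof -
  have uD: "u \<in> D" and ue: "cscale l0 u - A u = 0" using u_in_eigenspace by (auto simp: eigenspace_op_def)
  have l1: "((\<lambda>z. cscale ((z - l0) ^ Suc 0) (R z u)) \<longlongrightarrow> laurent_coeff 0 u) (at l0)"
    by (rule tendsto_coeff_top) (simp add: coeff_higher_zero)
  have ev: "\<forall>\<^sub>F z in at l0. u = cscale ((z - l0) ^ Suc 0) (R z u)"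
    using eventually_V
  proof eventually_elim
    case (elim z)
    then have z: "z \<in> U" "z \<noteq> l0" using V_subset by auto
    have "R z u = cscale (inverse (z - l0)) u"
    proof (rule resolvent_unique[OF z(1) dom_cscale[OF uD]])
      have h: "cscale z u - A u = cscale (z - l0) u" using ue by (simp add: cscale_diff_left algebra_simps)
      have "cscale z (cscale (inverse (z - l0)) u) - A (cscale (inverse (z - l0)) u) = cscale (inverse (z - l0)) (cscale z u - A u)"
        by (simp add: op_cscale[OF uD] cscale_commute[of z] cscale_diff)
      also have "\<dots> = u" using z(2) by (simp add: h cscale_cscale)
      finally show "cscale z (cscale (inverse (z - l0)) u) - A (cscale (inverse (z - l0)) u) = u" .
    qed
    then show ?case using z(2) by (simp add: cscale_cscale)
  qed
  have l2: "((\<lambda>z. cscale ((z - l0) ^ Suc 0) (R z u)) \<longlongrightarrow> u) (at l0)"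
    by (rule Lim_transform_eventually[OF tendsto_const]) (use ev in simp)
  show ?thesis using tendsto_unique[OF at_neq_bot l1 l2] .
qed

lemma range_residue: "range (laurent_coeff 0) = eigenspace_op A D l0"
proof
  show "range (laurent_coeff 0) \<subseteq> eigenspace_op A D l0" using residue_in_eigenspace by auto
  show "eigenspace_op A D l0 \<subseteq> range (laurent_coeff 0)"
  proof
    fix w assume "w \<in> eigenspace_op A D l0"
    then obtain c where "w = cscale c u" using ker by auto
    then have "w = laurent_coeff 0 (cscale c u)" by (simp add: coeff_cscale residue_u)
    then show "w \<in> range (laurent_coeff 0)" by simp
  qed
qed

lemma spectral_projection_residue: "spectral_projection A D l0 (laurent_coeff 0)"
  unfolding spectral_projection_def
  by (intro exI[of _ e0] conjI allI impI e0)
    (use has_integral_coeff[of _ 0, unfolded integrand_eq[abs_def] circle_def turn_def] in auto)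

lemma residue_rank_one: "laurent_coeff 0 = (\<lambda>f. cscale (\<phi> f / \<phi> u) u)"
proof
  fix f
  obtain c where c: "laurent_coeff 0 f = cscale c u" using residue_in_eigenspace[of f] ker by auto
  have "c * \<phi> u = \<phi> f" using adj_eigen_residue[of f] c adj_eigenspaceD(2)[OF phi] by simp
  then have "c = \<phi> f / \<phi> u" using phiu by (simp add: field_simps)
  then show "laurent_coeff 0 f = cscale (\<phi> f / \<phi> u) u" using c by simp
qed

end

section \<open>Positivity\<close>

lemma bounded_linear_real:
  assumes "bounded_linear \<phi>"
  shows "\<phi> (a + b) = \<phi> a + \<phi> b" "\<phi> (a - b) = \<phi> a - \<phi> b" "\<phi> (r *\<^sub>R a) = of_real r * \<phi> a"
  using linear_add[OF bounded_linear.linear[OF assms]] linear_diff[OF bounded_linear.linear[OF assms]]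
    linear_scale[OF bounded_linear.linear[OF assms]] by (auto simp: scaleR_conv_of_real)

lemma pos_functional_vanish_order_interval:
  fixes p x :: "'r::{real_normed_vector, ordered_real_vector}"
  assumes bl: "bounded_linear \<phi>" and pos: "pos_functional \<phi>"
    and p0: "\<phi> (p, 0) = 0" and h1: "x \<le> c *\<^sub>R p" and h2: "- x \<le> c *\<^sub>R p"
  shows "\<phi> (x, 0) = 0"
proof -
  note l = bounded_linear_real[OF bl]
  have pv1: "pos_vec (c *\<^sub>R p - x, 0)" using h1 by (simp add: pos_vec_def)
  have "0 \<le> c *\<^sub>R p - (- x)" using h2 by (simp only: diff_ge_0_iff_ge)
  then have pv2: "pos_vec (c *\<^sub>R p + x, 0)" by (simp add: pos_vec_def)
  have e1: "(c *\<^sub>R p - x, 0) = c *\<^sub>R (p, 0) - (x, (0::'r))" by simp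
  have e2: "(c *\<^sub>R p + x, 0) = c *\<^sub>R (p, 0) + (x, (0::'r))" by simp
  have "\<phi> (c *\<^sub>R p - x, 0) = - \<phi> (x, 0)" unfolding e1 l p0 by simp
  moreover have "\<phi> (c *\<^sub>R p + x, 0) = \<phi> (x, 0)" unfolding e2 l p0 by simp
  ultimately have "Im (\<phi> (x, 0)) = 0" "Re (- \<phi> (x, 0)) \<ge> 0" "Re (\<phi> (x, 0)) \<ge> 0"
    using pos pv1 pv2 unfolding pos_functional_def by (metis)+
  then show ?thesis by (simp add: complex_eq_iff)
qed

lemma pos_functional_vanish_quasi_interior:
  fixes u :: "'r::{real_normed_vector, ordered_real_vector} \<times> 'r"
  assumes qi: "quasi_interior u" and bl: "bounded_linear \<phi>" and hom: "\<And>c f. \<phi> (cscale c f) = c * \<phi> f"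
    and pos: "pos_functional \<phi>" and z: "\<phi> u = 0"
  shows "\<phi> f = 0"
proof -
  have pu: "pos_vec u" and cl: "closure (principal_ideal u) = UNIV" using qi by (auto simp: quasi_interior_def)
  have u: "u = (fst u, 0)" using pu by (simp add: pos_vec_def prod_eq_iff)
  have p0: "\<phi> (fst u, 0) = 0" using z u by simp
  have "principal_ideal u \<subseteq> {f. \<phi> f = 0}"
  proof
    fix f assume "f \<in> principal_ideal u"
    then obtain c where c: "\<And>\<theta>::real. cos \<theta> *\<^sub>R fst f + sin \<theta> *\<^sub>R snd f \<le> c *\<^sub>R fst u"
      by (auto simp: principal_ideal_def)
    have 1: "fst f \<le> c *\<^sub>R fst u" using c[of 0] by simp
    have 2: "- fst f \<le> c *\<^sub>R fst u" using c[of pi] by simp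
    have 3: "snd f \<le> c *\<^sub>R fst u" using c[of "pi/2"] by simp
    have 4: "- snd f \<le> c *\<^sub>R fst u" using c[of "- pi/2"] by simp
    have a: "\<phi> (fst f, 0) = 0" by (rule pos_functional_vanish_order_interval[OF bl pos p0 1 2])
    have b: "\<phi> (snd f, 0) = 0" by (rule pos_functional_vanish_order_interval[OF bl pos p0 3 4])
    have "(0, snd f) = cscale \<i> (snd f, 0)" by (simp add: cscale_def)
    then have b': "\<phi> (0, snd f) = 0" using hom b by simp
    have "f = (fst f, 0) + (0, snd f)" by simp
    then have "\<phi> f = \<phi> (fst f, 0) + \<phi> (0, snd f)" using bounded_linear_real(1)[OF bl] by metis
    then show "f \<in> {f. \<phi> f = 0}" using a b' by simp
  qed
  moreover have "closed {f. \<phi> f = 0}"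
    by (rule closed_Collect_eq) (auto intro: linear_continuous_on bl continuous_on_const)
  ultimately have "closure (principal_ideal u) \<subseteq> {f. \<phi> f = 0}" by (rule closure_minimal)
  then show ?thesis using cl by auto
qed

lemma quasi_interior_pos_functional_pos:
  fixes u :: "'r::{real_normed_vector, ordered_real_vector} \<times> 'r"
  assumes "quasi_interior u" "dual_functional \<phi>" "pos_functional \<phi>" "\<phi> \<noteq> (\<lambda>_. 0)"
  shows "Im (\<phi> u) = 0" "0 < Re (\<phi> u)"
proof -
  have "\<phi> u \<noteq> 0"
  proof
    assume "\<phi> u = 0"
    then have "\<phi> f = 0" for f
      using pos_functional_vanish_quasi_interior[OF assms(1) _ _ assms(3)] assms(2)
      unfolding dual_functional_def by blast
    then show False using assms(4) by auto
  qed
  moreover have "pos_vec u" using assms(1) by (simp add: quasi_interior_def)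
  then have "Im (\<phi> u) = 0" "0 \<le> Re (\<phi> u)" using assms(3) unfolding pos_functional_def by blast+
  ultimately show "Im (\<phi> u) = 0" "0 < Re (\<phi> u)" by (auto simp: complex_eq_iff)
qed

lemma strictly_pos_functional_imp_pos_functional:
  fixes \<phi> :: "'r::{real_normed_vector, ordered_real_vector} \<times> 'r \<Rightarrow> complex"
  assumes "strictly_pos_functional \<phi>" "linear \<phi>"
  shows "pos_functional \<phi>"
  unfolding pos_functional_def
proof (intro allI impI)
  fix f :: "'r \<times> 'r" assume "pos_vec f"
  show "Im (\<phi> f) = 0 \<and> 0 \<le> Re (\<phi> f)"
  proof (cases "f = 0")
    case True
    then show ?thesis using linear_0[OF assms(2)] by simp
  next
    case False
    then show ?thesis
      using assms(1) \<open>pos_vec f\<close> unfolding strictly_pos_functional_def by (meson less_imp_le)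
  qed
qed

lemma positive_eigen_pair:
  fixes A :: "'r::{real_normed_vector, ordered_real_vector} \<times> 'r \<Rightarrow> 'r \<times> 'r"
  assumes "\<exists>u\<in>eigenspace_op A D l0. pos_vec u \<and> u \<noteq> 0"
    and "\<exists>\<phi>\<in>adj_eigenspace A D l0. pos_functional \<phi> \<and> \<phi> \<noteq> (\<lambda>_. 0)"
    and "(\<exists>u\<in>eigenspace_op A D l0. quasi_interior u)
         \<or> (\<exists>\<phi>\<in>adj_eigenspace A D l0. strictly_pos_functional \<phi>)"
  obtains u \<phi> where "u \<in> eigenspace_op A D l0" "pos_vec u" "\<phi> \<in> adj_eigenspace A D l0"
    "pos_functional \<phi>" "Im (\<phi> u) = 0" "0 < Re (\<phi> u)"
  using assms(3)
proof
  assume "\<exists>u\<in>eigenspace_op A D l0. quasi_interior u"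
  then obtain u where u: "u \<in> eigenspace_op A D l0" "quasi_interior u" by auto
  obtain \<phi> where \<phi>: "\<phi> \<in> adj_eigenspace A D l0" "pos_functional \<phi>" "\<phi> \<noteq> (\<lambda>_. 0)"
    using assms(2) by auto
  have "dual_functional \<phi>" using \<phi>(1) by (simp add: adj_eigenspace_def adjoint_rel_def)
  then have "Im (\<phi> u) = 0" "0 < Re (\<phi> u)"
    using quasi_interior_pos_functional_pos[OF u(2) _ \<phi>(2,3)] by blast+
  moreover have "pos_vec u" using u(2) by (simp add: quasi_interior_def)
  ultimately show thesis using that u(1) \<phi>(1,2) by blast
next
  assume "\<exists>\<phi>\<in>adj_eigenspace A D l0. strictly_pos_functional \<phi>"
  then obtain \<phi> where \<phi>: "\<phi> \<in> adj_eigenspace A D l0" "strictly_pos_functional \<phi>" by auto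
  obtain u where u: "u \<in> eigenspace_op A D l0" "pos_vec u" "u \<noteq> 0" using assms(1) by auto
  have "linear \<phi>" using adj_eigenspaceD(1)[OF \<phi>(1)] by (rule bounded_linear.linear)
  then have "pos_functional \<phi>" by (rule strictly_pos_functional_imp_pos_functional[OF \<phi>(2)])
  moreover have "Im (\<phi> u) = 0" "0 < Re (\<phi> u)"
    using \<phi>(2) u(2,3) unfolding strictly_pos_functional_def by blast+
  ultimately show thesis using that u(1,2) \<phi>(1) by blast
qed

lemma pos_op_rank_one:
  fixes u :: "'r::{real_normed_vector, ordered_real_vector} \<times> 'r"
  assumes "pos_vec u" "pos_functional \<phi>" "Im (\<phi> u) = 0" "0 < Re (\<phi> u)"
  shows "pos_op (\<lambda>f. cscale (\<phi> f / \<phi> u) u)"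
  unfolding pos_op_def
proof (intro allI impI)
  fix f :: "'r \<times> 'r" assume "pos_vec f"
  then have "Im (\<phi> f) = 0" "Re (\<phi> f) \<ge> 0"
    using assms(2) unfolding pos_functional_def by blast+
  then have "Im (\<phi> f / \<phi> u) = 0" "Re (\<phi> f / \<phi> u) \<ge> 0"
    using assms(3,4) by (auto simp: Im_divide Re_divide)
  then show "pos_vec (cscale (\<phi> f / \<phi> u) u)"
    using assms(1) by (simp add: pos_vec_def cscale_def scaleR_nonneg_nonneg)
qed

theorem proposition7p9:
  fixes A :: "'r::{banach,ordered_real_vector,lattice} \<times> 'r \<Rightarrow> 'r \<times> 'r"
    and D :: "('r \<times> 'r) set"
    and l0 :: complex
  assumes "real_banach_lattice TYPE('r)"
    and "complex_linear_op A D" and "closed_op A D" and "densely_defined D"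
    and "resolvent_pole A D l0"
    and "one_dim_cspace (eigenspace_op A D l0)"
    and "\<exists>u\<in>eigenspace_op A D l0. pos_vec u \<and> u \<noteq> 0"
    and "\<exists>\<phi>\<in>adj_eigenspace A D l0. pos_functional \<phi> \<and> \<phi> \<noteq> (\<lambda>_. 0)"
    and "(\<exists>u\<in>eigenspace_op A D l0. quasi_interior u)
         \<or> (\<exists>\<phi>\<in>adj_eigenspace A D l0. strictly_pos_functional \<phi>)"
  shows "first_order_pole A D l0 \<and>
         (\<exists>P. spectral_projection A D l0 P \<and> one_dim_cspace (range P) \<and> pos_op P)"
proof -
  have op: "closed_operator A D" using assms(2,3) by unfold_locales
  obtain e0 n M \<delta> where "bounded_pole A D l0 e0 n M \<delta>"
    using resolvent_pole_imp_bounded_pole[OF op assms(5)] .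
  then interpret bounded_pole A D l0 e0 n M \<delta> .
  obtain u \<phi> where u: "u \<in> eigenspace_op A D l0" "pos_vec u"
    and \<phi>: "\<phi> \<in> adj_eigenspace A D l0" "pos_functional \<phi>" and \<phi>u: "Im (\<phi> u) = 0" "0 < Re (\<phi> u)"
    using positive_eigen_pair[OF assms(7-9)] .
  have "u \<noteq> 0" using \<phi>u adj_eigenspaceD(1)[OF \<phi>(1)] linear_0[OF bounded_linear.linear] by force
  then interpret simple_pole A D l0 e0 n M \<delta> u \<phi>
    using one_dim_cspace_generator[OF assms(6) u(1)] \<phi>(1) \<phi>u by unfold_locales auto
  have "first_order_pole A D l0"
    unfolding first_order_pole_def using assms(5) tendsto_residue by blast
  moreover have "pos_op (laurent_coeff 0)"
    unfolding residue_rank_one by (rule pos_op_rank_one[OF u(2) \<phi>(2) \<phi>u])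
  ultimately show ?thesis
    using spectral_projection_residue range_residue assms(6) by auto
qed

end
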